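(* Let $1\le p<\infty$ and let $d_{w,p}$ be a Lorentz sequence space. Then every strictly singular operator from $d_{w,p}$ to $\ell_p$ is compact, i.e. $\mathcal{SS}(d_{w,p},\ell_p)=\mathcal K(d_{w,p},\ell_p)$.
   Context: Let $1\le p<\infty$ and let $w=(w_n)$ be a real sequence with $w_1=1$, $w_n\downarrow 0$ and $\sum_n w_n=\infty$. The Lorentz sequence space $d_{w,p}$ is the Banach space of all $x=(x_n)\in c_0$ with $\|x\|_{d_{w,p}}=\big(\sum_{n}w_n (x^*_n)^p\big)^{1/p}<\infty$, where $(x^*_n)$ is the non-increasing rearrangement of $(|x_n|)$. An operator is strictly singular if its restriction to no infinite-dimensional closed subspace is an isomorphism. *)

theory Defs
  imports "HOL-Analysis.Analysis"
begin

text \<open>Sequences are real-valued functions on nat (index 0 plays the role of index 1).\<close>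

text \<open>Non-increasing rearrangement of |x| (distribution-function definition):
  x*_n = inf { s >= 0 : #{k. |x_k| > s} <= n }.\<close>
definition rearr :: "(nat \<Rightarrow> real) \<Rightarrow> nat \<Rightarrow> real" where
  "rearr x n = Inf {s. 0 \<le> s \<and> finite {k. s < \<bar>x k\<bar>} \<and> card {k. s < \<bar>x k\<bar>} \<le> n}"

definition lorentz_space :: "(nat \<Rightarrow> real) \<Rightarrow> real \<Rightarrow> (nat \<Rightarrow> real) set" where
  "lorentz_space w p = {x. x \<longlonglongrightarrow> 0 \<and> summable (\<lambda>n. w n * (rearr x n) powr p)}"

definition lorentz_norm :: "(nat \<Rightarrow> real) \<Rightarrow> real \<Rightarrow> (nat \<Rightarrow> real) \<Rightarrow> real" where
  "lorentz_norm w p x = (\<Sum>n. w n * (rearr x n) powr p) powr (1 / p)"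

definition ell_space :: "real \<Rightarrow> (nat \<Rightarrow> real) set" where
  "ell_space p = {x. summable (\<lambda>n. \<bar>x n\<bar> powr p)}"

definition ell_norm :: "real \<Rightarrow> (nat \<Rightarrow> real) \<Rightarrow> real" where
  "ell_norm p x = (\<Sum>n. \<bar>x n\<bar> powr p) powr (1 / p)"

definition seq_diff :: "(nat \<Rightarrow> real) \<Rightarrow> (nat \<Rightarrow> real) \<Rightarrow> nat \<Rightarrow> real" where
  "seq_diff x y = (\<lambda>k. x k - y k)"

definition bounded_linear_op ::
  "(nat \<Rightarrow> real) set \<Rightarrow> ((nat \<Rightarrow> real) \<Rightarrow> real) \<Rightarrow> (nat \<Rightarrow> real) set \<Rightarrow> ((nat \<Rightarrow> real) \<Rightarrow> real)
   \<Rightarrow> ((nat \<Rightarrow> real) \<Rightarrow> (nat \<Rightarrow> real)) \<Rightarrow> bool" where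
  "bounded_linear_op X nX Y nY T \<longleftrightarrow>
     (\<forall>x\<in>X. T x \<in> Y) \<and>
     (\<forall>x\<in>X. \<forall>y\<in>X. T (\<lambda>k. x k + y k) = (\<lambda>k. T x k + T y k)) \<and>
     (\<forall>x\<in>X. \<forall>c::real. T (\<lambda>k. c * x k) = (\<lambda>k. c * T x k)) \<and>
     (\<exists>C. \<forall>x\<in>X. nY (T x) \<le> C * nX x)"

definition fspan :: "(nat \<Rightarrow> real) set \<Rightarrow> (nat \<Rightarrow> real) set" where
  "fspan F = {v. \<exists>c. v = (\<lambda>k. \<Sum>f\<in>F. c f * f k)}"

definition infinite_dimensional :: "(nat \<Rightarrow> real) set \<Rightarrow> bool" where
  "infinite_dimensional M \<longleftrightarrow> (\<forall>F. finite F \<longrightarrow> \<not> M \<subseteq> fspan F)"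

definition linear_subspace_of :: "(nat \<Rightarrow> real) set \<Rightarrow> (nat \<Rightarrow> real) set \<Rightarrow> bool" where
  "linear_subspace_of M X \<longleftrightarrow> M \<subseteq> X \<and> (\<lambda>k. 0) \<in> M \<and>
     (\<forall>x\<in>M. \<forall>y\<in>M. (\<lambda>k. x k + y k) \<in> M) \<and> (\<forall>x\<in>M. \<forall>c::real. (\<lambda>k. c * x k) \<in> M)"

definition norm_closed_in :: "(nat \<Rightarrow> real) set \<Rightarrow> (nat \<Rightarrow> real) set \<Rightarrow> ((nat \<Rightarrow> real) \<Rightarrow> real) \<Rightarrow> bool" where
  "norm_closed_in M X nX \<longleftrightarrow>
     (\<forall>(u::nat\<Rightarrow>nat\<Rightarrow>real) x. (\<forall>j. u j \<in> M) \<longrightarrow> x \<in> X \<longrightarrow> (\<lambda>j. nX (seq_diff (u j) x)) \<longlonglongrightarrow> 0 \<longrightarrow> x \<in> M)"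

definition strictly_singular ::
  "(nat \<Rightarrow> real) set \<Rightarrow> ((nat \<Rightarrow> real) \<Rightarrow> real) \<Rightarrow> ((nat \<Rightarrow> real) \<Rightarrow> real)
   \<Rightarrow> ((nat \<Rightarrow> real) \<Rightarrow> (nat \<Rightarrow> real)) \<Rightarrow> bool" where
  "strictly_singular X nX nY T \<longleftrightarrow>
     \<not> (\<exists>M. linear_subspace_of M X \<and> norm_closed_in M X nX \<and> infinite_dimensional M \<and>
            (\<exists>c>0. \<forall>x\<in>M. c * nX x \<le> nY (T x)))"

definition compact_op ::
  "(nat \<Rightarrow> real) set \<Rightarrow> ((nat \<Rightarrow> real) \<Rightarrow> real) \<Rightarrow> (nat \<Rightarrow> real) set \<Rightarrow> ((nat \<Rightarrow> real) \<Rightarrow> real)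
   \<Rightarrow> ((nat \<Rightarrow> real) \<Rightarrow> (nat \<Rightarrow> real)) \<Rightarrow> bool" where
  "compact_op X nX Y nY T \<longleftrightarrow>
     (\<forall>(u::nat\<Rightarrow>nat\<Rightarrow>real) bd. (\<forall>j. u j \<in> X \<and> nX (u j) \<le> bd) \<longrightarrow>
        (\<exists>(r::nat\<Rightarrow>nat) y. strict_mono r \<and> y \<in> Y \<and> (\<lambda>j. nY (seq_diff (T (u (r j))) y)) \<longlonglongrightarrow> 0))"

end

theory Submission
  imports Defs "HOL-Library.Function_Algebras"
begin

(*
  Suppose T is not compact. Passing to a coordinatewise convergent subsequence of a bounded
  sequence whose images have no convergent subsequence, and taking differences of far-apart
  terms, gives a bounded sequence z_m with z_m and T z_m coordinatewise null but
  ||T z_m|| >= delta. A gliding hump argument cuts disjoint blocks out of suitable z_m; the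
  restrictions b_i of z_m to the blocks have images T b_i that are small perturbations of
  disjointly supported vectors g_i of norm >= delta/2. For disjointly supported vectors,
  ||sum a_i b_i||^p <= sum |a_i|^p ||b_i||^p in d(w,p), because sum w_n x*_n^p is a nonnegative
  combination of sums of the n largest |x_k|^p (summation by parts), which are subadditive;
  and ||sum a_i g_i||^p = sum |a_i|^p ||g_i||^p in l_p. Hence T is bounded below on the closed,
  infinite-dimensional space of sequences that are a multiple of b_i on the i-th block, so T is
  not strictly singular.
*)

section \<open>Real sequences\<close>

definition seq_head :: "nat \<Rightarrow> (nat \<Rightarrow> real) \<Rightarrow> nat \<Rightarrow> real" where
  "seq_head N x = (\<lambda>k. if k < N then x k else 0)"

definition seq_tail :: "nat \<Rightarrow> (nat \<Rightarrow> real) \<Rightarrow> nat \<Rightarrow> real" where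
  "seq_tail N x = (\<lambda>k. if N \<le> k then x k else 0)"

lemma tendsto_0_if_abs_le:
  fixes f g :: "nat \<Rightarrow> real"
  assumes "g \<longlonglongrightarrow> 0" "\<And>k. \<bar>f k\<bar> \<le> g k"
  shows "f \<longlonglongrightarrow> 0"
  using assms(2) by (intro Lim_null_comparison[OF always_eventually assms(1)]) auto

lemma seq_compose_ge_tendsto:
  fixes f :: "nat \<Rightarrow> real"
  assumes "f \<longlonglongrightarrow> l" "\<And>m. g m \<ge> m"
  shows "(\<lambda>m. f (g m)) \<longlonglongrightarrow> l"
proof -
  have "filterlim g sequentially sequentially"
    using assms(2) by (intro filterlim_at_top_mono[OF filterlim_ident]) (auto intro: always_eventually)
  then show ?thesis using filterlim_compose[OF assms(1)] by blast
qed

interpretation real_seq: vector_space "\<lambda>(c::real) (f::nat \<Rightarrow> real). (\<lambda>k. c * f k)"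
  by unfold_locales (auto simp: fun_eq_iff algebra_simps plus_fun_def)

lemma sum_fun_apply: "(\<Sum>v\<in>S. (g v :: nat \<Rightarrow> real)) k = (\<Sum>v\<in>S. g v k)"
  by (induction S rule: infinite_finite_induct) (auto simp: zero_fun_def)

lemma fspan_subset_span: "fspan F \<subseteq> real_seq.span F"
proof
  fix v assume "v \<in> fspan F"
  then obtain c where c: "v = (\<lambda>k. \<Sum>f\<in>F. c f * f k)" by (auto simp: fspan_def)
  have "v = (\<Sum>f\<in>F. (\<lambda>k. c f * f k))" unfolding c by (rule ext) (simp add: sum_fun_apply)
  also have "\<dots> \<in> real_seq.span F"
    by (intro real_seq.span_sum real_seq.span_scale[of _ F "c _", unfolded] real_seq.span_base)
  finally show "v \<in> real_seq.span F" .
qed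

lemma diagonal_family_not_in_fspan:
  fixes b :: "nat \<Rightarrow> nat \<Rightarrow> real" and k :: "nat \<Rightarrow> nat"
  assumes diag: "\<And>i. i \<le> n \<Longrightarrow> b i (k i) \<noteq> 0"
    and off_diag: "\<And>i j. i \<le> n \<Longrightarrow> j \<le> n \<Longrightarrow> i \<noteq> j \<Longrightarrow> b j (k i) = 0"
    and F: "finite F" "card F \<le> n"
  shows "\<exists>i\<le>n. b i \<notin> fspan F"
proof (rule ccontr)
  assume "\<not> ?thesis"
  then have span: "b ` {..n} \<subseteq> real_seq.span F" using fspan_subset_span by auto
  have inj: "inj_on b {..n}"
    using diag off_diag by (intro inj_onI) (metis atMost_iff)
  have "\<not> real_seq.dependent (b ` {..n})"
  proof
    assume "real_seq.dependent (b ` {..n})"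
    then obtain u v where uv: "v \<in> b ` {..n}" "u v \<noteq> 0" "(\<Sum>v\<in>b ` {..n}. (\<lambda>k. u v * v k)) = 0"
      using real_seq.dependent_finite[of "b ` {..n}"] by blast
    obtain i where i: "i \<le> n" "v = b i" using uv(1) by auto
    have "0 = (\<Sum>j\<le>n. u (b j) * b j (k i))"
      using fun_cong[OF uv(3), of "k i"] sum.reindex[OF inj, of "\<lambda>v. u v * v (k i)"]
      by (simp add: sum_fun_apply zero_fun_def)
    also have "\<dots> = u (b i) * b i (k i)"
    proof -
      have "(\<Sum>j\<in>{..n} - {i}. u (b j) * b j (k i)) = 0" using i(1) off_diag[of i] by (intro sum.neutral) auto
      then show ?thesis using sum.remove[of "{..n}" i "\<lambda>j. u (b j) * b j (k i)"] i(1) by simp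
    qed
    finally show False using uv(2) i diag[of i] by simp
  qed
  then have "card (b ` {..n}) \<le> card F" using real_seq.independent_span_bound[OF F(1)] span by blast
  then show False using card_image[OF inj] F(2) by simp
qed

lemma bounded_seq_coordinatewise_convergent_subseq:
  fixes f :: "nat \<Rightarrow> nat \<Rightarrow> real"
  assumes "\<And>j k. \<bar>f j k\<bar> \<le> B k"
  obtains r g where "strict_mono r" "\<And>k. (\<lambda>j. f (r j) k) \<longlonglongrightarrow> g k"
proof -
  define S where "S = PiE UNIV (\<lambda>k. {-B k..B k})"
  have "compactin (product_topology (\<lambda>i. euclidean) UNIV) S"
    unfolding S_def by (simp add: compactin_PiE)
  then have "seq_compact S" by (simp add: euclidean_product_topology compact_imp_seq_compact)
  moreover have "f j \<in> S" for j
  proof -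
    have "f j k \<in> {-B k..B k}" for k using assms[of j k] by (auto simp: abs_le_iff)
    then show ?thesis by (simp add: S_def PiE_iff)
  qed
  ultimately obtain l r where "strict_mono r" "(f \<circ> r) \<longlonglongrightarrow> l"
    unfolding seq_compact_def by metis
  moreover have "(\<lambda>j. (f \<circ> r) j k) \<longlonglongrightarrow> l k" for k
    by (rule continuous_on_tendsto_compose[OF continuous_on_product_coordinates \<open>(f \<circ> r) \<longlonglongrightarrow> l\<close>]) auto
  ultimately show ?thesis using that by (auto simp: o_def)
qed

text \<open>Interleaving two bounded sequences into one gives a common subsequence.\<close>
lemma bounded_seq_pair_coordinatewise_convergent_subseq:
  fixes f g :: "nat \<Rightarrow> nat \<Rightarrow> real"
  assumes "\<And>j k. \<bar>f j k\<bar> \<le> B" "\<And>j k. \<bar>g j k\<bar> \<le> B"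
  obtains r a b where "strict_mono r" "\<And>k. (\<lambda>j. f (r j) k) \<longlonglongrightarrow> a k" "\<And>k. (\<lambda>j. g (r j) k) \<longlonglongrightarrow> b k"
proof -
  define F where "F j k = (if even k then f j (k div 2) else g j (k div 2))" for j k
  have "\<bar>F j k\<bar> \<le> B" for j k using assms by (simp add: F_def)
  then obtain r l where r: "strict_mono r" and l: "\<And>k. (\<lambda>j. F (r j) k) \<longlonglongrightarrow> l k"
    using bounded_seq_coordinatewise_convergent_subseq[of F "\<lambda>_. B"] by blast
  have "(\<lambda>j. f (r j) k) \<longlonglongrightarrow> l (2 * k)" "(\<lambda>j. g (r j) k) \<longlonglongrightarrow> l (Suc (2 * k))" for k
    using l[of "2 * k"] l[of "Suc (2 * k)"] by (simp_all add: F_def)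
  then show ?thesis by (rule that[OF r])
qed

section \<open>Decreasing rearrangement\<close>

text \<open>A greedy enumeration lists the indices in order of decreasing \<open>g\<close>.\<close>
definition greedy_enum :: "(nat \<Rightarrow> real) \<Rightarrow> (nat \<Rightarrow> nat) \<Rightarrow> bool" where
  "greedy_enum g e \<longleftrightarrow> (\<forall>i. e i \<notin> e ` {..<i} \<and> (\<forall>j. j \<notin> e ` {..<i} \<longrightarrow> g j \<le> g (e i)))"

lemma max_outside_finite_exists:
  fixes g :: "nat \<Rightarrow> real"
  assumes "g \<longlonglongrightarrow> 0" "\<And>k. g k \<ge> 0" "finite F"
  shows "\<exists>k. k \<notin> F \<and> (\<forall>j. j \<notin> F \<longrightarrow> g j \<le> g k)"
proof (cases "\<forall>j. j \<notin> F \<longrightarrow> g j = 0")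
  case True
  obtain k where "k \<notin> F" using assms(3) ex_new_if_finite infinite_UNIV_nat by blast
  then show ?thesis using True assms(2) by (metis order.refl)
next
  case False
  then obtain j0 where j0: "j0 \<notin> F" "g j0 > 0" using assms(2) by (metis order.not_eq_order_implies_strict)
  obtain N where N: "\<And>k. k \<ge> N \<Longrightarrow> g k < g j0"
    using order_tendstoD(2)[OF assms(1) j0(2)] by (auto simp: eventually_sequentially)
  define B where "B = {k. k \<notin> F \<and> g j0 \<le> g k}"
  have "B \<subseteq> {..<N}" using N by (auto simp: B_def) (meson leD not_le_imp_less)
  then have "finite B" by (rule finite_subset) simp
  moreover have "j0 \<in> B" using j0 by (simp add: B_def)
  ultimately have "Max (g ` B) \<in> g ` B" by (intro Max_in) auto
  then obtain k where "k \<in> B" "g k = Max (g ` B)" by auto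
  with \<open>finite B\<close> have k: "k \<in> B" "\<And>j. j \<in> B \<Longrightarrow> g j \<le> g k" by auto
  have "g j \<le> g k" if "j \<notin> F" for j
    using k that by (cases "g j0 \<le> g j") (auto simp: B_def)
  then show ?thesis using k(1) by (auto simp: B_def)
qed

definition max_outside :: "(nat \<Rightarrow> real) \<Rightarrow> nat set \<Rightarrow> nat" where
  "max_outside g F = (SOME k. k \<notin> F \<and> (\<forall>j. j \<notin> F \<longrightarrow> g j \<le> g k))"

primrec greedy_prefix :: "(nat \<Rightarrow> real) \<Rightarrow> nat \<Rightarrow> nat list" where
  "greedy_prefix g 0 = []"
| "greedy_prefix g (Suc n) = greedy_prefix g n @ [max_outside g (set (greedy_prefix g n))]"

lemma greedy_enum_exists:
  fixes g :: "nat \<Rightarrow> real"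
  assumes "g \<longlonglongrightarrow> 0" "\<And>k. g k \<ge> 0"
  obtains e where "greedy_enum g e"
proof
  define e where "e i = max_outside g (set (greedy_prefix g i))" for i
  have prefix: "set (greedy_prefix g i) = e ` {..<i}" for i
    by (induction i) (auto simp: e_def lessThan_Suc)
  show "greedy_enum g e"
    unfolding greedy_enum_def
  proof
    fix i
    have "e i \<notin> set (greedy_prefix g i) \<and> (\<forall>j. j \<notin> set (greedy_prefix g i) \<longrightarrow> g j \<le> g (e i))"
      unfolding e_def max_outside_def
      by (rule someI_ex, rule max_outside_finite_exists[OF assms]) simp
    then show "e i \<notin> e ` {..<i} \<and> (\<forall>j. j \<notin> e ` {..<i} \<longrightarrow> g j \<le> g (e i))"
      by (simp add: prefix)
  qed
qed

lemma greedy_enum_inj: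
  assumes "greedy_enum g e"
  shows "inj e"
proof (rule injI)
  fix a b assume "e a = e b"
  then show "a = b"
    using assms unfolding greedy_enum_def by (metis image_eqI lessThan_iff linorder_neqE_nat)
qed

lemma greedy_enum_antimono:
  assumes G: "greedy_enum g e" and "j \<le> i"
  shows "g (e i) \<le> g (e j)"
proof (cases "j = i")
  case False
  have "e i \<notin> e ` {..<i}" using G unfolding greedy_enum_def by blast
  then have "e i \<notin> e ` {..<j}" using \<open>j \<le> i\<close> by auto
  then show ?thesis using G unfolding greedy_enum_def by blast
qed simp

lemma greedy_enum_ge_outside:
  assumes "greedy_enum g e" "k \<notin> e ` {..<n}" "j < n"
  shows "g k \<le> g (e j)"
proof -
  have "k \<notin> e ` {..<j}" using assms(2,3) by auto
  then show ?thesis using assms(1) unfolding greedy_enum_def by blast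
qed

lemma greedy_enum_abs_exists:
  assumes "x \<longlonglongrightarrow> 0"
  obtains e where "greedy_enum (\<lambda>k. \<bar>x k\<bar>) e"
  using greedy_enum_exists[of "\<lambda>k. \<bar>x k\<bar>"] tendsto_rabs_zero[OF assms] by auto

lemma rearr_le:
  assumes "0 \<le> s" "\<And>k. \<bar>y k\<bar> \<le> s"
  shows "rearr y n \<le> s"
proof -
  have "{k. s < \<bar>y k\<bar>} = {}" using assms(2) by (auto simp: not_less[symmetric])
  then have "s \<in> {s. 0 \<le> s \<and> finite {k. s < \<bar>y k\<bar>} \<and> card {k. s < \<bar>y k\<bar>} \<le> n}"
    using assms(1) by simp
  then show ?thesis unfolding rearr_def by (rule cInf_lower) (auto intro: bdd_belowI[of _ 0])
qed

lemma greedy_enum_level_admissible: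
  assumes G: "greedy_enum (\<lambda>k. \<bar>x k\<bar>) e" and y: "\<And>k. \<bar>y k\<bar> \<le> \<bar>x k\<bar>"
  shows "finite {k. \<bar>x (e i)\<bar> < \<bar>y k\<bar>} \<and> card {k. \<bar>x (e i)\<bar> < \<bar>y k\<bar>} \<le> i"
proof -
  let ?v = "\<bar>x (e i)\<bar>"
  have sub: "{k. ?v < \<bar>y k\<bar>} \<subseteq> e ` {..<i}"
    using G y unfolding greedy_enum_def by (smt (verit) mem_Collect_eq subsetI)
  have "card {k. ?v < \<bar>y k\<bar>} \<le> card (e ` {..<i})" by (rule card_mono[OF _ sub]) simp
  also have "\<dots> \<le> i" using card_image_le[of "{..<i}" e] by simp
  finally show ?thesis using finite_subset[OF sub] by simp
qed

lemma rearr_le_greedy_enum: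
  assumes "greedy_enum (\<lambda>k. \<bar>x k\<bar>) e" "\<And>k. \<bar>y k\<bar> \<le> \<bar>x k\<bar>"
  shows "rearr y i \<le> \<bar>x (e i)\<bar>"
  unfolding rearr_def using greedy_enum_level_admissible[OF assms]
  by (intro cInf_lower) (auto intro: bdd_belowI[of _ 0])

lemma rearr_greedy_enum:
  assumes G: "greedy_enum (\<lambda>k. \<bar>x k\<bar>) e"
  shows "rearr x i = \<bar>x (e i)\<bar>"
proof (rule antisym)
  show "rearr x i \<le> \<bar>x (e i)\<bar>" using rearr_le_greedy_enum[OF G] by simp
  have "\<bar>x (e i)\<bar> \<le> s"
    if "0 \<le> s" "finite {k. s < \<bar>x k\<bar>}" "card {k. s < \<bar>x k\<bar>} \<le> i" for s
  proof (rule ccontr)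
    assume "\<not> \<bar>x (e i)\<bar> \<le> s"
    then have "e ` {..i} \<subseteq> {k. s < \<bar>x k\<bar>}"
      using greedy_enum_antimono[OF G] by (smt (verit) atMost_iff image_subset_iff mem_Collect_eq)
    then have "card (e ` {..i}) \<le> i" using that by (meson card_mono le_trans)
    moreover have "card (e ` {..i}) = Suc i"
      using greedy_enum_inj[OF G] by (simp add: card_image inj_on_subset)
    ultimately show False by simp
  qed
  then show "\<bar>x (e i)\<bar> \<le> rearr x i"
    unfolding rearr_def using greedy_enum_level_admissible[OF G, of x i]
    by (intro cInf_greatest) auto
qed
lemma rearr_nonneg: "x \<longlonglongrightarrow> 0 \<Longrightarrow> rearr x n \<ge> 0"
  by (metis abs_ge_zero greedy_enum_abs_exists rearr_greedy_enum)

lemma rearr_zero [simp]: "rearr (\<lambda>k. 0) n = 0"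
  using rearr_nonneg[of "\<lambda>k. 0" n] rearr_le[of 0 "\<lambda>k. 0" n] by simp

lemma abs_le_rearr_0:
  assumes "x \<longlonglongrightarrow> 0"
  shows "\<bar>x k\<bar> \<le> rearr x 0"
proof -
  obtain e where G: "greedy_enum (\<lambda>k. \<bar>x k\<bar>) e" using greedy_enum_abs_exists[OF assms] .
  show ?thesis using G rearr_greedy_enum[OF G, of 0] unfolding greedy_enum_def by auto
qed

lemma rearr_mono:
  assumes "x \<longlonglongrightarrow> 0" "\<And>k. \<bar>y k\<bar> \<le> \<bar>x k\<bar>"
  shows "rearr y n \<le> rearr x n"
proof -
  obtain e where G: "greedy_enum (\<lambda>k. \<bar>x k\<bar>) e" using greedy_enum_abs_exists[OF assms(1)] .
  show ?thesis using rearr_le_greedy_enum[OF G assms(2)] rearr_greedy_enum[OF G] by simp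
qed

lemma rearr_scale:
  assumes "x \<longlonglongrightarrow> 0"
  shows "rearr (\<lambda>k. c * x k) n = \<bar>c\<bar> * rearr x n"
proof -
  obtain e where G: "greedy_enum (\<lambda>k. \<bar>x k\<bar>) e" using greedy_enum_abs_exists[OF assms] .
  have "greedy_enum (\<lambda>k. \<bar>c * x k\<bar>) e"
    using G unfolding greedy_enum_def by (auto simp: abs_mult intro: mult_left_mono)
  then show ?thesis using rearr_greedy_enum[OF G] rearr_greedy_enum by (simp add: abs_mult)
qed

lemma rearr_seq_tail_tendsto_0:
  assumes x0: "x \<longlonglongrightarrow> 0"
  shows "(\<lambda>N. rearr (seq_tail N x) n) \<longlonglongrightarrow> 0"
proof (rule order_tendstoI)
  fix e :: real assume "e > 0"
  then obtain K where K: "\<And>k. k \<ge> K \<Longrightarrow> \<bar>x k\<bar> < e / 2"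
    using order_tendstoD(2)[OF tendsto_rabs_zero[OF x0], of "e / 2"] by (auto simp: eventually_sequentially)
  have "rearr (seq_tail N x) n \<le> e / 2" if "N \<ge> K" for N
    using that K \<open>e > 0\<close> by (intro rearr_le) (auto simp: seq_tail_def less_imp_le)
  then show "eventually (\<lambda>N. rearr (seq_tail N x) n < e) sequentially"
    using \<open>e > 0\<close> unfolding eventually_sequentially by (intro exI[of _ K]) force
next
  fix e :: real assume "e < 0"
  have "seq_tail N x \<longlonglongrightarrow> 0" for N
    by (intro tendsto_0_if_abs_le[OF tendsto_rabs_zero[OF x0]]) (simp add: seq_tail_def)
  then have "e < rearr (seq_tail N x) n" for N
    using \<open>e < 0\<close> rearr_nonneg less_le_trans by blast
  then show "eventually (\<lambda>N. e < rearr (seq_tail N x) n) sequentially" by simp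
qed

lemma sum_le_sum_dominating_set:
  fixes h :: "nat \<Rightarrow> real"
  assumes "finite A" "finite E" "card A \<le> card E" "\<And>k. h k \<ge> 0"
    and "\<And>k j. k \<in> A - E \<Longrightarrow> j \<in> E \<Longrightarrow> h k \<le> h j"
  shows "sum h A \<le> sum h E"
proof -
  have card_diff: "card (A - E) \<le> card (E - A)"
    using card_Int_Diff[OF assms(1), of E] card_Int_Diff[OF assms(2), of A] assms(3)
    by (simp add: Int_commute)
  have "sum h (A - E) \<le> sum h (E - A)"
  proof (cases "A - E = {}")
    case True then show ?thesis using assms(4) by (metis sum.empty sum_nonneg)
  next
    case False
    define M where "M = Max (h ` (A - E))"
    have "M \<in> h ` (A - E)" unfolding M_def using assms(1) False by (intro Max_in) auto
    then have M_le: "M \<le> h j" if "j \<in> E - A" for j using assms(5) that by auto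
    have "sum h (A - E) \<le> of_nat (card (A - E)) * M"
      using sum_bounded_above[of "A - E" h M] assms(1) by (simp add: M_def)
    also have "\<dots> \<le> of_nat (card (E - A)) * M"
      using card_diff \<open>M \<in> h ` (A - E)\<close> assms(4) by (intro mult_right_mono) auto
    also have "\<dots> \<le> sum h (E - A)"
      using sum_bounded_below[of "E - A" M h] M_le by simp
    finally show ?thesis .
  qed
  moreover have "sum h A = sum h (A - E) + sum h (A \<inter> E)" "sum h E = sum h (E - A) + sum h (A \<inter> E)"
    using assms(1,2) by (metis Int_commute sum.Int_Diff add.commute)+
  ultimately show ?thesis by simp
qed
definition top_sum :: "real \<Rightarrow> (nat \<Rightarrow> real) \<Rightarrow> nat \<Rightarrow> real" where
  "top_sum p x n = (\<Sum>i<n. rearr x i powr p)"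

lemma top_sum_attained:
  assumes "x \<longlonglongrightarrow> 0"
  obtains E where "finite E" "card E = n" "top_sum p x n = (\<Sum>k\<in>E. \<bar>x k\<bar> powr p)"
    "\<And>k j. k \<notin> E \<Longrightarrow> j \<in> E \<Longrightarrow> \<bar>x k\<bar> \<le> \<bar>x j\<bar>"
proof -
  obtain e where G: "greedy_enum (\<lambda>k. \<bar>x k\<bar>) e" using greedy_enum_abs_exists[OF assms] .
  have inj: "inj_on e {..<n}" using greedy_enum_inj[OF G] by (meson inj_on_subset subset_UNIV)
  have "top_sum p x n = (\<Sum>i<n. \<bar>x (e i)\<bar> powr p)"
    unfolding top_sum_def using rearr_greedy_enum[OF G] by simp
  also have "\<dots> = (\<Sum>k\<in>e ` {..<n}. \<bar>x k\<bar> powr p)"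
    using sum.reindex[OF inj, of "\<lambda>k. \<bar>x k\<bar> powr p"] by simp
  finally show ?thesis
    using that[of "e ` {..<n}"] inj greedy_enum_ge_outside[OF G] by (auto simp: card_image)
qed

lemma sum_le_top_sum:
  assumes "x \<longlonglongrightarrow> 0" "finite A" "card A \<le> n" "p > 0"
  shows "(\<Sum>k\<in>A. \<bar>x k\<bar> powr p) \<le> top_sum p x n"
proof -
  obtain E where E: "finite E" "card E = n" "top_sum p x n = (\<Sum>k\<in>E. \<bar>x k\<bar> powr p)"
    "\<And>k j. k \<notin> E \<Longrightarrow> j \<in> E \<Longrightarrow> \<bar>x k\<bar> \<le> \<bar>x j\<bar>"
    by (rule top_sum_attained[OF assms(1), where n=n and p=p]) blast
  show ?thesis
    unfolding E(3) using assms E by (intro sum_le_sum_dominating_set) (auto intro: powr_mono2)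
qed

lemma top_sum_dominated:
  assumes "x \<longlonglongrightarrow> 0" "y \<longlonglongrightarrow> 0" "s \<longlonglongrightarrow> 0" "p > 0"
    and "\<And>k. \<bar>s k\<bar> powr p \<le> \<bar>x k\<bar> powr p + \<bar>y k\<bar> powr p"
  shows "top_sum p s n \<le> top_sum p x n + top_sum p y n"
proof -
  obtain E where E: "finite E" "card E = n" "top_sum p s n = (\<Sum>k\<in>E. \<bar>s k\<bar> powr p)"
    by (rule top_sum_attained[OF assms(3), where n=n and p=p]) blast
  have "top_sum p s n \<le> (\<Sum>k\<in>E. \<bar>x k\<bar> powr p) + (\<Sum>k\<in>E. \<bar>y k\<bar> powr p)"
    unfolding E(3) sum.distrib[symmetric] by (intro sum_mono assms(5))
  also have "\<dots> \<le> top_sum p x n + top_sum p y n"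
    using E by (intro add_mono sum_le_top_sum assms) auto
  finally show ?thesis .
qed

lemma top_sum_finite_support:
  assumes "\<And>k. k \<ge> N \<Longrightarrow> s k = 0"
  shows "top_sum p s n \<le> (\<Sum>k<N. \<bar>s k\<bar> powr p)"
proof -
  have "s \<longlonglongrightarrow> 0"
    using assms by (intro tendsto_eventually) (auto simp: eventually_sequentially)
  then obtain E where E: "finite E" "top_sum p s n = (\<Sum>k\<in>E. \<bar>s k\<bar> powr p)"
    using top_sum_attained by metis
  have "(\<Sum>k\<in>E. \<bar>s k\<bar> powr p) = (\<Sum>k\<in>E \<inter> {..<N}. \<bar>s k\<bar> powr p)"
    using E(1) assms by (intro sum.mono_neutral_right) (auto, meson not_le)
  also have "\<dots> \<le> (\<Sum>k<N. \<bar>s k\<bar> powr p)" by (intro sum_mono2) auto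
  finally show ?thesis using E by simp
qed

section \<open>The spaces \<open>\<ell>\<^sub>p\<close>\<close>

definition ell_sum :: "real \<Rightarrow> (nat \<Rightarrow> real) \<Rightarrow> real" where
  "ell_sum p y = (\<Sum>k. \<bar>y k\<bar> powr p)"

lemma ell_norm_eq_ell_sum: "ell_norm p y = ell_sum p y powr (1 / p)"
  by (simp add: ell_norm_def ell_sum_def)

lemma ell_norm_nonneg: "ell_norm p y \<ge> 0"
  by (simp add: ell_norm_eq_ell_sum)

lemma ell_sum_nonneg: "y \<in> ell_space p \<Longrightarrow> ell_sum p y \<ge> 0"
  unfolding ell_sum_def ell_space_def by (auto intro: suminf_nonneg)

lemma ell_sum_eq_norm_powr: "p > 0 \<Longrightarrow> y \<in> ell_space p \<Longrightarrow> ell_sum p y = ell_norm p y powr p"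
  using ell_sum_nonneg[of y p] by (simp add: ell_norm_eq_ell_sum powr_powr)

lemma abs_powr_le_ell_sum:
  assumes "y \<in> ell_space p"
  shows "\<bar>y k\<bar> powr p \<le> ell_sum p y"
  unfolding ell_sum_def using assms sum_le_suminf[of "\<lambda>k. \<bar>y k\<bar> powr p" "{k}"]
  by (simp add: ell_space_def)

lemma abs_le_ell_norm:
  assumes "p > 0" "y \<in> ell_space p"
  shows "\<bar>y k\<bar> \<le> ell_norm p y"
proof -
  have "(\<bar>y k\<bar> powr p) powr (1 / p) \<le> ell_sum p y powr (1 / p)"
    using assms by (intro powr_mono2 abs_powr_le_ell_sum) auto
  then show ?thesis using assms(1) by (simp add: ell_norm_eq_ell_sum powr_powr)
qed

lemma ell_space_zero [simp]: "(\<lambda>k. 0) \<in> ell_space p"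
  and ell_norm_zero [simp]: "p > 0 \<Longrightarrow> ell_norm p (\<lambda>k. 0) = 0"
  by (simp_all add: ell_space_def ell_norm_def)

lemma ell_mono:
  assumes "p > 0" "y \<in> ell_space p" "\<And>k. \<bar>s k\<bar> \<le> \<bar>y k\<bar>"
  shows "s \<in> ell_space p \<and> ell_norm p s \<le> ell_norm p y"
proof -
  have le: "\<bar>s k\<bar> powr p \<le> \<bar>y k\<bar> powr p" for k using assms by (intro powr_mono2) auto
  have y: "summable (\<lambda>k. \<bar>y k\<bar> powr p)" using assms(2) by (simp add: ell_space_def)
  then have s: "summable (\<lambda>k. \<bar>s k\<bar> powr p)" by (rule summable_comparison_test') (use le in auto)
  have "ell_sum p s \<le> ell_sum p y" unfolding ell_sum_def by (intro suminf_le le s y)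
  then have "ell_norm p s \<le> ell_norm p y"
    unfolding ell_norm_eq_ell_sum using assms(1) s by (intro powr_mono2 ell_sum_nonneg) (auto simp: ell_space_def)
  then show ?thesis using s by (simp add: ell_space_def)
qed

lemma ell_seq_head: "p > 0 \<Longrightarrow> y \<in> ell_space p \<Longrightarrow>
    seq_head N y \<in> ell_space p \<and> ell_norm p (seq_head N y) \<le> ell_norm p y"
  and ell_seq_tail: "p > 0 \<Longrightarrow> y \<in> ell_space p \<Longrightarrow>
    seq_tail N y \<in> ell_space p \<and> ell_norm p (seq_tail N y) \<le> ell_norm p y"
  by (rule ell_mono; simp add: seq_head_def seq_tail_def)+

lemma abs_le_root_sum_powr:
  fixes a :: "nat \<Rightarrow> real"
  assumes "p > 0" "i < J"
  shows "\<bar>a i\<bar> \<le> (\<Sum>i<J. \<bar>a i\<bar> powr p) powr (1 / p)"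
proof -
  have "(\<bar>a i\<bar> powr p) powr (1 / p) \<le> (\<Sum>i<J. \<bar>a i\<bar> powr p) powr (1 / p)"
    using assms by (intro powr_mono2 member_le_sum) auto
  then show ?thesis using assms(1) by (simp add: powr_powr)
qed

lemma ell_norm_scale:
  assumes "p > 0" "y \<in> ell_space p"
  shows "(\<lambda>k. c * y k) \<in> ell_space p \<and> ell_norm p (\<lambda>k. c * y k) = \<bar>c\<bar> * ell_norm p y"
proof -
  have e: "(\<lambda>k. \<bar>c * y k\<bar> powr p) = (\<lambda>k. \<bar>c\<bar> powr p * \<bar>y k\<bar> powr p)"
    by (simp add: abs_mult powr_mult)
  have s: "summable (\<lambda>k. \<bar>y k\<bar> powr p)" using assms by (simp add: ell_space_def)
  have "ell_norm p (\<lambda>k. c * y k) = (\<bar>c\<bar> powr p * (\<Sum>k. \<bar>y k\<bar> powr p)) powr (1/p)"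
    unfolding ell_norm_def e using suminf_mult[OF s] by simp
  also have "\<dots> = \<bar>c\<bar> * ell_norm p y"
    using assms(1) by (simp add: powr_mult suminf_nonneg[OF s] powr_powr ell_norm_def)
  finally show ?thesis using s e by (simp add: ell_space_def summable_mult)
qed

lemma ell_sum_scale: "p > 0 \<Longrightarrow> y \<in> ell_space p \<Longrightarrow> ell_sum p (\<lambda>k. c * y k) = \<bar>c\<bar> powr p * ell_sum p y"
  using ell_norm_scale[of p y c] by (simp add: ell_sum_eq_norm_powr powr_mult ell_norm_nonneg)

lemma ell_sum_disjoint_add:
  assumes "p > 0" "y \<in> ell_space p" "z \<in> ell_space p" "\<And>k. y k = 0 \<or> z k = 0"
  shows "ell_sum p (\<lambda>k. y k + z k) = ell_sum p y + ell_sum p z"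
proof -
  have "\<bar>y k + z k\<bar> powr p = \<bar>y k\<bar> powr p + \<bar>z k\<bar> powr p" for k
    using assms(1) assms(4)[of k] by auto
  then show ?thesis using assms(2,3) by (simp add: ell_sum_def ell_space_def suminf_add)
qed

lemma ell_sum_finite_support:
  assumes "\<And>k. k \<ge> N \<Longrightarrow> s k = 0"
  shows "s \<in> ell_space p \<and> ell_sum p s = (\<Sum>k<N. \<bar>s k\<bar> powr p)"
proof -
  have z: "\<And>k. k \<notin> {..<N} \<Longrightarrow> \<bar>s k\<bar> powr p = 0" using assms by auto
  show ?thesis using summable_finite[of "{..<N}" "\<lambda>k. \<bar>s k\<bar> powr p", OF _ z]
      suminf_finite[of "{..<N}" "\<lambda>k. \<bar>s k\<bar> powr p", OF _ z]
    by (simp add: ell_space_def ell_sum_def)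
qed

lemma ell_norm_tail_tendsto_0:
  assumes "p > 0" "y \<in> ell_space p"
  shows "(\<lambda>N. ell_norm p (seq_tail N y)) \<longlonglongrightarrow> 0"
proof -
  have s: "summable (\<lambda>k. \<bar>y k\<bar> powr p)" using assms by (simp add: ell_space_def)
  have "ell_sum p (seq_tail N y) = (\<Sum>k. \<bar>y k\<bar> powr p) - (\<Sum>k<N. \<bar>y k\<bar> powr p)" for N
  proof -
    have "(\<lambda>k. \<bar>seq_tail N y k\<bar> powr p) = (\<lambda>k. \<bar>y k\<bar> powr p - (if k < N then \<bar>y k\<bar> powr p else 0))"
      using assms(1) by (auto simp: fun_eq_iff seq_tail_def)
    moreover have h: "summable (\<lambda>k. if k < N then \<bar>y k\<bar> powr p else 0)"
      by (rule summable_finite[of "{..<N}"]) auto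
    moreover have "(\<Sum>k. if k < N then \<bar>y k\<bar> powr p else 0) = (\<Sum>k<N. \<bar>y k\<bar> powr p)"
      by (subst suminf_finite[of "{..<N}"]) auto
    ultimately show ?thesis unfolding ell_sum_def using suminf_diff[OF s h] by simp
  qed
  moreover have "(\<lambda>N. (\<Sum>k. \<bar>y k\<bar> powr p) - (\<Sum>k<N. \<bar>y k\<bar> powr p)) \<longlonglongrightarrow> 0"
    using tendsto_diff[OF tendsto_const summable_LIMSEQ[OF s], of "\<Sum>k. \<bar>y k\<bar> powr p"] by simp
  ultimately have "(\<lambda>N. ell_sum p (seq_tail N y)) \<longlonglongrightarrow> 0" by simp
  then show ?thesis unfolding ell_norm_eq_ell_sum
    by (rule tendsto_zero_powrI[OF _ tendsto_const])
      (use assms ell_sum_nonneg ell_seq_tail in auto)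
qed

lemma powr_convex_combination_le:
  fixes a b t :: real
  assumes "1 \<le> p" "0 \<le> a" "0 \<le> b" "0 \<le> t" "t \<le> 1"
  shows "((1 - t) * a + t * b) powr p \<le> (1 - t) * a powr p + t * b powr p"
proof -
  have scale: "(s * c) powr p \<le> s * c powr p" if "0 \<le> s" "s \<le> 1" "0 \<le> c" for s c :: real
  proof -
    have "s powr p \<le> s" using powr_mono'[of 1 p s] that assms(1) by simp
    then show ?thesis using that by (simp add: powr_mult mult_right_mono)
  qed
  consider "a = 0" | "b = 0" | "a > 0" "b > 0" using assms by linarith
  then show ?thesis
  proof cases
    case 1 then show ?thesis using scale[of t b] assms by simp
  next
    case 2 then show ?thesis using scale[of "1 - t" a] assms by simp
  next
    case 3 then show ?thesis using convex_onD[OF powr_convex[OF assms(1)], of t a b] assms by simp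
  qed
qed

lemma ell_minkowski:
  assumes "1 \<le> p" "y \<in> ell_space p" "z \<in> ell_space p" "\<And>k. \<bar>s k\<bar> \<le> \<bar>y k\<bar> + \<bar>z k\<bar>"
  shows "s \<in> ell_space p \<and> ell_norm p s \<le> ell_norm p y + ell_norm p z"
proof -
  have p: "p > 0" using assms(1) by simp
  define A where "A = ell_norm p y"
  define B where "B = ell_norm p z"
  consider "A = 0" | "B = 0" | "A > 0" "B > 0"
    using ell_norm_nonneg[of p y] ell_norm_nonneg[of p z] unfolding A_def B_def by linarith
  then show ?thesis
  proof cases
    case 1
    then have "\<bar>s k\<bar> \<le> \<bar>z k\<bar>" for k
      using abs_le_ell_norm[OF p assms(2), of k] assms(4)[of k] by (simp add: A_def)
    then show ?thesis using ell_mono[OF p assms(3)] 1 by (simp add: A_def)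
  next
    case 2
    then have "\<bar>s k\<bar> \<le> \<bar>y k\<bar>" for k
      using abs_le_ell_norm[OF p assms(3), of k] assms(4)[of k] by (simp add: B_def)
    then show ?thesis using ell_mono[OF p assms(2)] 2 by (simp add: B_def)
  next
    case 3
    \<comment> \<open>Write y + z as the convex combination (A + B) ((1 - t) y/A + t z/B) and apply convexity of powr.\<close>
    define t where "t = B / (A + B)"
    have t: "0 \<le> t" "t \<le> 1" "1 - t = A / (A + B)" using 3 by (auto simp: t_def field_simps)
    define f where
      "f k = (A + B) powr p * ((1 - t) * (\<bar>y k\<bar> powr p / A powr p) + t * (\<bar>z k\<bar> powr p / B powr p))" for k
    have bound: "\<bar>s k\<bar> powr p \<le> f k" for k
    proof -
      have "(1 - t) * (\<bar>y k\<bar> / A) = \<bar>y k\<bar> / (A + B)" "t * (\<bar>z k\<bar> / B) = \<bar>z k\<bar> / (A + B)"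
        using 3 unfolding t(3) by (simp_all add: t_def)
      then have "\<bar>y k\<bar> + \<bar>z k\<bar> = (A + B) * ((1 - t) * (\<bar>y k\<bar> / A) + t * (\<bar>z k\<bar> / B))"
        using 3 by (simp add: add_divide_distrib[symmetric])
      then have "\<bar>s k\<bar> powr p \<le> ((A + B) * ((1 - t) * (\<bar>y k\<bar> / A) + t * (\<bar>z k\<bar> / B))) powr p"
        using assms(4)[of k] p by (intro powr_mono2) auto
      also have "\<dots> = (A + B) powr p * ((1 - t) * (\<bar>y k\<bar> / A) + t * (\<bar>z k\<bar> / B)) powr p"
        using 3 t by (simp add: powr_mult)
      also have "\<dots> \<le> (A + B) powr p * ((1 - t) * (\<bar>y k\<bar> / A) powr p + t * (\<bar>z k\<bar> / B) powr p)"
        using 3 t assms(1) by (intro mult_left_mono powr_convex_combination_le) auto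
      also have "\<dots> = f k" using 3 by (simp add: f_def powr_divide)
      finally show ?thesis .
    qed
    have "ell_sum p y = A powr p" "ell_sum p z = B powr p"
      using ell_sum_eq_norm_powr[OF p assms(2)] ell_sum_eq_norm_powr[OF p assms(3)] by (auto simp: A_def B_def)
    then have "f sums ((A + B) powr p * ((1 - t) * (A powr p / A powr p) + t * (B powr p / B powr p)))"
      unfolding f_def ell_sum_def using assms(2,3)
      by (intro sums_mult sums_add sums_divide) (auto simp: ell_space_def sums_iff)
    then have f: "f sums ((A + B) powr p)" using 3 by simp
    have s: "summable (\<lambda>k. \<bar>s k\<bar> powr p)"
      by (rule summable_comparison_test'[OF sums_summable[OF f]]) (use bound in auto)
    have "ell_sum p s \<le> (A + B) powr p"
      unfolding ell_sum_def using suminf_le[OF bound s sums_summable[OF f]] sums_unique[OF f] by simp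
    then have "ell_sum p s powr (1/p) \<le> ((A + B) powr p) powr (1/p)"
      using s p by (intro powr_mono2 ell_sum_nonneg) (auto simp: ell_space_def)
    also have "\<dots> = A + B" using 3 p by (simp add: powr_powr)
    finally show ?thesis using s by (simp add: ell_space_def ell_norm_eq_ell_sum A_def B_def)
  qed
qed

lemma ell_norm_add_le:
  "1 \<le> p \<Longrightarrow> y \<in> ell_space p \<Longrightarrow> z \<in> ell_space p \<Longrightarrow>
    (\<lambda>k. y k + z k) \<in> ell_space p \<and> ell_norm p (\<lambda>k. y k + z k) \<le> ell_norm p y + ell_norm p z"
  by (rule ell_minkowski) auto

lemma ell_norm_diff_le:
  "1 \<le> p \<Longrightarrow> y \<in> ell_space p \<Longrightarrow> z \<in> ell_space p \<Longrightarrow>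
    (\<lambda>k. y k - z k) \<in> ell_space p \<and> ell_norm p (\<lambda>k. y k - z k) \<le> ell_norm p y + ell_norm p z"
  by (rule ell_minkowski) auto

lemma ell_norm_sum_le:
  assumes "1 \<le> p" "finite I" "\<And>i. i \<in> I \<Longrightarrow> u i \<in> ell_space p"
  shows "(\<lambda>k. \<Sum>i\<in>I. u i k) \<in> ell_space p \<and>
    ell_norm p (\<lambda>k. \<Sum>i\<in>I. u i k) \<le> (\<Sum>i\<in>I. ell_norm p (u i))"
  using assms(2,3)
proof (induction I rule: finite_induct)
  case (insert i I)
  then show ?case
    using ell_norm_add_le[OF assms(1), of "u i" "\<lambda>k. \<Sum>i\<in>I. u i k"] by auto
qed (use assms(1) in simp)

lemma disjoint_support_sum_insert:
  assumes "i \<notin> I" "\<And>j. j \<in> I \<Longrightarrow> u i k = 0 \<or> u j k = 0"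
  shows "u i k = 0 \<or> (\<Sum>j\<in>I. u j k) = 0"
  using assms by (metis sum.neutral)

lemma ell_sum_disjoint_sum:
  assumes "1 \<le> p" "finite I" "\<And>i. i \<in> I \<Longrightarrow> u i \<in> ell_space p"
    and "\<And>i j k. i \<in> I \<Longrightarrow> j \<in> I \<Longrightarrow> i \<noteq> j \<Longrightarrow> u i k = 0 \<or> u j k = 0"
  shows "ell_sum p (\<lambda>k. \<Sum>i\<in>I. u i k) = (\<Sum>i\<in>I. ell_sum p (u i))"
  using assms(2-4)
proof (induction I rule: finite_induct)
  case (insert i I)
  have "(\<lambda>k. \<Sum>j\<in>I. u j k) \<in> ell_space p"
    using ell_norm_sum_le[OF assms(1) insert(1)] insert.prems(1) by blast
  moreover have "u i k = 0 \<or> (\<Sum>j\<in>I. u j k) = 0" for k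
    using insert.hyps(2) insert.prems(2)[of i] by (intro disjoint_support_sum_insert) auto
  ultimately show ?case
    using insert assms(1) ell_sum_disjoint_add[of p "u i" "\<lambda>k. \<Sum>j\<in>I. u j k"] by simp
qed (simp add: ell_sum_def)

lemma ell_norm_head_tendsto_0:
  assumes "p > 0" "\<And>k. (\<lambda>j. h j k) \<longlonglongrightarrow> 0"
  shows "(\<lambda>j. ell_norm p (seq_head N (h j))) \<longlonglongrightarrow> 0"
proof -
  have head: "seq_head N (h j) \<in> ell_space p \<and> ell_sum p (seq_head N (h j)) = (\<Sum>k<N. \<bar>h j k\<bar> powr p)" for j
    using ell_sum_finite_support[of N "seq_head N (h j)" p] by (simp add: seq_head_def)
  have "(\<lambda>j. \<Sum>k<N. \<bar>h j k\<bar> powr p) \<longlonglongrightarrow> (\<Sum>k<N. 0)"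
    by (intro tendsto_sum tendsto_zero_powrI[OF tendsto_rabs_zero[OF assms(2)] tendsto_const])
      (use assms(1) in auto)
  then have "(\<lambda>j. ell_sum p (seq_head N (h j))) \<longlonglongrightarrow> 0" using head by simp
  then show ?thesis unfolding ell_norm_eq_ell_sum
    by (rule tendsto_zero_powrI[OF _ tendsto_const]) (use assms(1) head in \<open>auto intro!: always_eventually sum_nonneg\<close>)
qed

lemma ell_norm_le_head_tail:
  assumes "1 \<le> p" "y \<in> ell_space p"
  shows "ell_norm p y \<le> ell_norm p (seq_head N y) + ell_norm p (seq_tail N y)"
proof -
  have "seq_head N y \<in> ell_space p" "seq_tail N y \<in> ell_space p"
    using ell_seq_head ell_seq_tail assms by auto
  moreover have "\<bar>y k\<bar> \<le> \<bar>seq_head N y k\<bar> + \<bar>seq_tail N y k\<bar>" for k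
    by (simp add: seq_head_def seq_tail_def)
  ultimately show ?thesis using ell_minkowski[OF assms(1)] by blast
qed

text \<open>Fatou's lemma for coordinatewise limits in \<open>\<ell>\<^sub>p\<close>.\<close>
lemma ell_space_coordinatewise_limit:
  assumes "p > 0" "\<And>j. v j \<in> ell_space p" "\<And>j. ell_norm p (v j) \<le> B"
    and "\<And>k. (\<lambda>j. v j k) \<longlonglongrightarrow> y k"
  shows "y \<in> ell_space p"
proof -
  have "(\<Sum>k<K. \<bar>y k\<bar> powr p) \<le> B powr p" for K
  proof (rule LIMSEQ_le_const2)
    show "(\<lambda>j. \<Sum>k<K. \<bar>v j k\<bar> powr p) \<longlonglongrightarrow> (\<Sum>k<K. \<bar>y k\<bar> powr p)"
      using assms(1) by (intro tendsto_sum tendsto_powr' tendsto_rabs assms(4)) auto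
    have "(\<Sum>k<K. \<bar>v j k\<bar> powr p) \<le> ell_sum p (v j)" for j
      using assms(2) unfolding ell_sum_def by (intro sum_le_suminf) (auto simp: ell_space_def)
    also have "\<dots> j = ell_norm p (v j) powr p" for j by (rule ell_sum_eq_norm_powr[OF assms(1,2)])
    also have "\<dots> j \<le> B powr p" for j
      using assms(1,3) ell_norm_nonneg by (intro powr_mono2) auto
    finally show "\<exists>N. \<forall>j\<ge>N. (\<Sum>k<K. \<bar>v j k\<bar> powr p) \<le> B powr p" by blast
  qed
  then have "summable (\<lambda>k. \<bar>y k\<bar> powr p)" by (intro summableI_nonneg_bounded) auto
  then show ?thesis by (simp add: ell_space_def)
qed

lemma ell_not_null_imp_separated:
  assumes p: "1 \<le> p" and h: "\<And>j. h j \<in> ell_space p" "\<And>k. (\<lambda>j. h j k) \<longlonglongrightarrow> 0"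
    and not_null: "\<not> (\<lambda>j. ell_norm p (h j)) \<longlonglongrightarrow> 0"
  obtains \<epsilon> where "\<epsilon> > 0" "\<And>m. \<exists>j\<ge>m. \<epsilon> \<le> ell_norm p (\<lambda>k. h j k - h m k)"
proof -
  obtain \<epsilon> where \<epsilon>: "\<epsilon> > 0" "\<not> eventually (\<lambda>j. dist (ell_norm p (h j)) 0 < \<epsilon>) sequentially"
    using not_null tendsto_iff by blast
  then have big: "\<exists>j\<ge>N. \<epsilon> \<le> ell_norm p (h j)" for N
    by (auto simp: eventually_sequentially not_less ell_norm_nonneg)
  have "\<exists>j\<ge>m. \<epsilon> / 2 \<le> ell_norm p (\<lambda>k. h j k - h m k)" for m
  proof -
    obtain N where N: "ell_norm p (seq_tail N (h m)) < \<epsilon> / 4"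
      using LIMSEQ_D[OF ell_norm_tail_tendsto_0[OF _ h(1)], of "\<epsilon> / 4"] \<epsilon>(1) p
      by (auto simp: ell_norm_nonneg)
    obtain B where B: "\<And>j. j \<ge> B \<Longrightarrow> ell_norm p (seq_head N (h j)) < \<epsilon> / 4"
      using LIMSEQ_D[OF ell_norm_head_tendsto_0[where N=N and p=p and h=h, OF _ h(2)], of "\<epsilon> / 4"] \<epsilon>(1) p
      by (auto simp: ell_norm_nonneg)
    obtain j where j: "j \<ge> max B m" "\<epsilon> \<le> ell_norm p (h j)" using big by blast
    define d where "d = (\<lambda>k. h j k - h m k)"
    have d: "d \<in> ell_space p" unfolding d_def using ell_norm_diff_le[OF p h(1) h(1)] by blast
    have tails: "seq_tail N d \<in> ell_space p" "seq_tail N (h m) \<in> ell_space p"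
      using ell_seq_tail d h(1) p by auto
    have "\<epsilon> \<le> ell_norm p (seq_head N (h j)) + ell_norm p (seq_tail N (h j))"
      using j(2) ell_norm_le_head_tail[OF p h(1), of j N] by linarith
    moreover have "ell_norm p (seq_tail N (h j)) \<le> ell_norm p (seq_tail N d) + ell_norm p (seq_tail N (h m))"
      using ell_minkowski[OF p tails, of "seq_tail N (h j)"]
      by (simp add: seq_tail_def d_def abs_triangle_ineq[of "h j k - h m k" "h m k" for k, simplified])
    moreover have "ell_norm p (seq_tail N d) \<le> ell_norm p d"
      using ell_seq_tail d p by auto
    ultimately have "\<epsilon> / 2 \<le> ell_norm p d" using B[of j] j(1) N by linarith
    then show ?thesis using j(1) unfolding d_def by (intro exI[of _ j]) auto
  qed
  then show ?thesis using that[of "\<epsilon> / 2"] \<epsilon>(1) by auto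
qed

section \<open>Lorentz sequence spaces\<close>

definition lorentz_sum :: "(nat \<Rightarrow> real) \<Rightarrow> real \<Rightarrow> (nat \<Rightarrow> real) \<Rightarrow> real" where
  "lorentz_sum w p x = (\<Sum>n. w n * rearr x n powr p)"

lemma lorentz_norm_eq_lorentz_sum: "lorentz_norm w p x = lorentz_sum w p x powr (1 / p)"
  by (simp add: lorentz_norm_def lorentz_sum_def)

lemma sum_mult_by_parts:
  fixes w a :: "nat \<Rightarrow> real"
  shows "(\<Sum>n<N. w n * a n) = (\<Sum>n<N. (w n - w (Suc n)) * (\<Sum>i<Suc n. a i)) + w N * (\<Sum>i<N. a i)"
  by (induction N) (simp_all add: algebra_simps)

locale lorentz_weight =
  fixes w :: "nat \<Rightarrow> real" and p :: real
  assumes w_decseq: "decseq w" and w_tendsto_0: "w \<longlonglongrightarrow> 0" and w_0: "w 0 = 1" and p_pos: "p > 0"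
begin

lemma w_nonneg: "w n \<ge> 0"
  using decseq_ge[OF w_decseq w_tendsto_0] by blast

lemma w_diff_nonneg: "w (Suc n) \<le> w n"
  using w_decseq by (simp add: decseq_Suc_iff)

lemma lorentz_partial_le_sum:
  "x \<in> lorentz_space w p \<Longrightarrow> (\<Sum>n<N. w n * rearr x n powr p) \<le> lorentz_sum w p x"
  unfolding lorentz_sum_def lorentz_space_def by (intro sum_le_suminf) (auto simp: w_nonneg)

lemma lorentz_sum_nonneg: "x \<in> lorentz_space w p \<Longrightarrow> lorentz_sum w p x \<ge> 0"
  unfolding lorentz_sum_def lorentz_space_def by (intro suminf_nonneg) (auto simp: w_nonneg)

lemma lorentz_space_if_partial_bounded:
  assumes "s \<longlonglongrightarrow> 0" "\<And>N. (\<Sum>n<N. w n * rearr s n powr p) \<le> B"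
  shows "s \<in> lorentz_space w p \<and> lorentz_sum w p s \<le> B"
proof -
  have "summable (\<lambda>n. w n * rearr s n powr p)"
    using assms by (intro summableI_nonneg_bounded) (auto simp: w_nonneg)
  then show ?thesis
    using assms unfolding lorentz_space_def lorentz_sum_def by (auto intro: suminf_le_const)
qed

text \<open>Since \<open>w\<close> decreases, this is a nonnegative combination of top sums.\<close>
lemma lorentz_partial_eq_top_sums:
  "(\<Sum>n<N. w n * rearr x n powr p) = (\<Sum>n<N. (w n - w (Suc n)) * top_sum p x (Suc n)) + w N * top_sum p x N"
  unfolding top_sum_def by (rule sum_mult_by_parts)

lemma lorentz_sum_dominated:
  assumes "x \<in> lorentz_space w p" "y \<in> lorentz_space w p" "s \<longlonglongrightarrow> 0"
    and "\<And>k. \<bar>s k\<bar> powr p \<le> \<bar>x k\<bar> powr p + \<bar>y k\<bar> powr p"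
  shows "s \<in> lorentz_space w p \<and> lorentz_sum w p s \<le> lorentz_sum w p x + lorentz_sum w p y"
proof (rule lorentz_space_if_partial_bounded[OF assms(3)])
  fix N
  have top: "top_sum p s n \<le> top_sum p x n + top_sum p y n" for n
    using assms p_pos by (intro top_sum_dominated) (auto simp: lorentz_space_def)
  have "(\<Sum>n<N. w n * rearr s n powr p)
      \<le> (\<Sum>n<N. (w n - w (Suc n)) * (top_sum p x (Suc n) + top_sum p y (Suc n)))
         + w N * (top_sum p x N + top_sum p y N)"
    unfolding lorentz_partial_eq_top_sums
    by (intro add_mono sum_mono mult_left_mono top w_nonneg) (simp add: w_diff_nonneg)
  also have "\<dots> = (\<Sum>n<N. w n * rearr x n powr p) + (\<Sum>n<N. w n * rearr y n powr p)"
    unfolding lorentz_partial_eq_top_sums by (simp add: distrib_left sum.distrib)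
  also have "\<dots> \<le> lorentz_sum w p x + lorentz_sum w p y"
    by (intro add_mono lorentz_partial_le_sum assms)
  finally show "(\<Sum>n<N. w n * rearr s n powr p) \<le> lorentz_sum w p x + lorentz_sum w p y" .
qed

lemma lorentz_space_zero [simp]: "(\<lambda>k. 0) \<in> lorentz_space w p"
  and lorentz_sum_zero [simp]: "lorentz_sum w p (\<lambda>k. 0) = 0"
  using p_pos by (simp_all add: lorentz_space_def lorentz_sum_def)

lemma lorentz_sum_mono:
  assumes "x \<in> lorentz_space w p" "\<And>k. \<bar>y k\<bar> \<le> \<bar>x k\<bar>"
  shows "y \<in> lorentz_space w p \<and> lorentz_sum w p y \<le> lorentz_sum w p x"
proof -
  have "(\<lambda>k. \<bar>x k\<bar>) \<longlonglongrightarrow> 0" using assms(1) by (simp add: lorentz_space_def tendsto_rabs_zero)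
  then have "y \<longlonglongrightarrow> 0" using assms(2) by (rule tendsto_0_if_abs_le)
  moreover have "\<bar>y k\<bar> powr p \<le> \<bar>x k\<bar> powr p + \<bar>0::real\<bar> powr p" for k
    using powr_mono2[of p "\<bar>y k\<bar>" "\<bar>x k\<bar>"] assms(2)[of k] p_pos by simp
  ultimately have "y \<in> lorentz_space w p \<and> lorentz_sum w p y \<le> lorentz_sum w p x + lorentz_sum w p (\<lambda>k. 0)"
    by (intro lorentz_sum_dominated[OF assms(1) lorentz_space_zero])
  then show ?thesis by simp
qed

lemma lorentz_sum_scale:
  assumes "x \<in> lorentz_space w p"
  shows "(\<lambda>k. c * x k) \<in> lorentz_space w p \<and> lorentz_sum w p (\<lambda>k. c * x k) = \<bar>c\<bar> powr p * lorentz_sum w p x"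
proof -
  have x0: "x \<longlonglongrightarrow> 0" using assms by (simp add: lorentz_space_def)
  have e: "(\<lambda>n. w n * rearr (\<lambda>k. c * x k) n powr p) = (\<lambda>n. \<bar>c\<bar> powr p * (w n * rearr x n powr p))"
    using rearr_scale[OF x0] rearr_nonneg[OF x0] by (auto simp: powr_mult)
  have s: "summable (\<lambda>n. w n * rearr x n powr p)" using assms by (simp add: lorentz_space_def)
  have "(\<lambda>k. c * x k) \<longlonglongrightarrow> 0" using tendsto_mult_right_zero[OF x0] by simp
  moreover have "summable (\<lambda>n. w n * rearr (\<lambda>k. c * x k) n powr p)"
    unfolding e by (rule summable_mult[OF s])
  moreover have "lorentz_sum w p (\<lambda>k. c * x k) = \<bar>c\<bar> powr p * lorentz_sum w p x"
    unfolding lorentz_sum_def e using suminf_mult[OF s] by simp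
  ultimately show ?thesis by (simp add: lorentz_space_def)
qed

lemma lorentz_sum_quasi_triangle:
  assumes "x \<in> lorentz_space w p" "y \<in> lorentz_space w p" "\<And>k. \<bar>s k\<bar> \<le> \<bar>x k\<bar> + \<bar>y k\<bar>"
  shows "s \<in> lorentz_space w p \<and> lorentz_sum w p s \<le> 2 powr p * (lorentz_sum w p x + lorentz_sum w p y)"
proof -
  have "(\<lambda>k. \<bar>x k\<bar> + \<bar>y k\<bar>) \<longlonglongrightarrow> 0"
    using assms(1,2) by (intro tendsto_add_zero tendsto_rabs_zero) (auto simp: lorentz_space_def)
  then have "s \<longlonglongrightarrow> 0" using assms(3) by (rule tendsto_0_if_abs_le)
  moreover have "\<bar>s k\<bar> powr p \<le> \<bar>2 * x k\<bar> powr p + \<bar>2 * y k\<bar> powr p" for k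
  proof -
    have "\<bar>s k\<bar> powr p \<le> max \<bar>2 * x k\<bar> \<bar>2 * y k\<bar> powr p"
      using assms(3)[of k] p_pos by (intro powr_mono2) auto
    also have "\<dots> \<le> \<bar>2 * x k\<bar> powr p + \<bar>2 * y k\<bar> powr p" by (simp add: max_def)
    finally show ?thesis .
  qed
  moreover have "(\<lambda>k. 2 * x k) \<in> lorentz_space w p" "(\<lambda>k. 2 * y k) \<in> lorentz_space w p"
    using lorentz_sum_scale assms(1,2) by blast+
  ultimately have "s \<in> lorentz_space w p \<and>
      lorentz_sum w p s \<le> lorentz_sum w p (\<lambda>k. 2 * x k) + lorentz_sum w p (\<lambda>k. 2 * y k)"
    by (intro lorentz_sum_dominated) auto
  then show ?thesis
    using lorentz_sum_scale[OF assms(1), of 2] lorentz_sum_scale[OF assms(2), of 2] by (simp add: distrib_left)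
qed

lemma lorentz_sum_disjoint_add:
  assumes "x \<in> lorentz_space w p" "y \<in> lorentz_space w p" "\<And>k. x k = 0 \<or> y k = 0"
  shows "(\<lambda>k. x k + y k) \<in> lorentz_space w p \<and>
    lorentz_sum w p (\<lambda>k. x k + y k) \<le> lorentz_sum w p x + lorentz_sum w p y"
proof (rule lorentz_sum_dominated[OF assms(1,2)])
  show "(\<lambda>k. x k + y k) \<longlonglongrightarrow> 0"
    using assms(1,2) tendsto_add[of x 0 sequentially y 0] by (simp add: lorentz_space_def)
  show "\<bar>x k + y k\<bar> powr p \<le> \<bar>x k\<bar> powr p + \<bar>y k\<bar> powr p" for k using assms(3)[of k] by auto
qed

lemma lorentz_sum_disjoint_sum:
  assumes "finite I" "\<And>i. i \<in> I \<Longrightarrow> u i \<in> lorentz_space w p"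
    and "\<And>i j k. i \<in> I \<Longrightarrow> j \<in> I \<Longrightarrow> i \<noteq> j \<Longrightarrow> u i k = 0 \<or> u j k = 0"
  shows "(\<lambda>k. \<Sum>i\<in>I. u i k) \<in> lorentz_space w p \<and>
    lorentz_sum w p (\<lambda>k. \<Sum>i\<in>I. u i k) \<le> (\<Sum>i\<in>I. lorentz_sum w p (u i))"
  using assms
proof (induction I rule: finite_induct)
  case (insert i I)
  have IH: "(\<lambda>k. \<Sum>j\<in>I. u j k) \<in> lorentz_space w p"
    "lorentz_sum w p (\<lambda>k. \<Sum>j\<in>I. u j k) \<le> (\<Sum>j\<in>I. lorentz_sum w p (u j))"
    using insert.prems by (simp_all add: insert.IH)
  have "u i k = 0 \<or> (\<Sum>j\<in>I. u j k) = 0" for k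
    using insert.hyps(2) insert.prems(2)[of i] by (intro disjoint_support_sum_insert) auto
  then have step: "(\<lambda>k. u i k + (\<Sum>j\<in>I. u j k)) \<in> lorentz_space w p"
    "lorentz_sum w p (\<lambda>k. u i k + (\<Sum>j\<in>I. u j k)) \<le> lorentz_sum w p (u i) + lorentz_sum w p (\<lambda>k. \<Sum>j\<in>I. u j k)"
    using lorentz_sum_disjoint_add[OF _ IH(1)] insert.prems(1) by auto
  show ?case
    unfolding sum.insert[OF insert.hyps] using step IH(2) by auto
qed simp

lemma lorentz_sum_finite_support:
  assumes "\<And>k. k \<ge> N \<Longrightarrow> s k = 0"
  shows "s \<in> lorentz_space w p \<and> lorentz_sum w p s \<le> (\<Sum>k<N. \<bar>s k\<bar> powr p)"
proof (rule lorentz_space_if_partial_bounded)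
  show "s \<longlonglongrightarrow> 0"
    using assms by (intro tendsto_eventually) (auto simp: eventually_sequentially)
  fix M
  let ?Q = "\<Sum>k<N. \<bar>s k\<bar> powr p"
  have "(\<Sum>n<M. w n * rearr s n powr p) \<le> (\<Sum>n<M. (w n - w (Suc n)) * ?Q) + w M * ?Q"
    unfolding lorentz_partial_eq_top_sums using w_diff_nonneg
    by (intro add_mono sum_mono mult_left_mono top_sum_finite_support assms w_nonneg) auto
  also have "\<dots> = (w 0 - w M) * ?Q + w M * ?Q"
    by (simp add: sum_distrib_right[symmetric] sum_lessThan_telescope')
  also have "\<dots> = ?Q" using w_0 by (simp add: algebra_simps)
  finally show "(\<Sum>n<M. w n * rearr s n powr p) \<le> ?Q" .
qed

lemma abs_powr_le_lorentz_sum: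
  assumes "x \<in> lorentz_space w p"
  shows "\<bar>x k\<bar> powr p \<le> lorentz_sum w p x"
proof -
  have "\<bar>x k\<bar> powr p \<le> rearr x 0 powr p"
    using assms p_pos abs_le_rearr_0 by (intro powr_mono2) (auto simp: lorentz_space_def)
  also have "\<dots> = (\<Sum>n<1. w n * rearr x n powr p)" using w_0 by simp
  also have "\<dots> \<le> lorentz_sum w p x" by (rule lorentz_partial_le_sum[OF assms])
  finally show ?thesis .
qed

lemma lorentz_sum_tail_tendsto_0:
  assumes "x \<in> lorentz_space w p"
  shows "(\<lambda>N. lorentz_sum w p (seq_tail N x)) \<longlonglongrightarrow> 0"
proof -
  have x0: "x \<longlonglongrightarrow> 0" and sm: "summable (\<lambda>n. w n * rearr x n powr p)"
    using assms by (auto simp: lorentz_space_def)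
  have tail_le: "\<bar>seq_tail N x k\<bar> \<le> \<bar>x k\<bar>" for N k by (simp add: seq_tail_def)
  have tail0: "seq_tail N x \<longlonglongrightarrow> 0" for N
    using lorentz_sum_mono[OF assms tail_le[of N]] by (simp add: lorentz_space_def)
  have "(\<lambda>N. w n * rearr (seq_tail N x) n powr p) \<longlonglongrightarrow> 0" for n
    using tendsto_mult_right_zero[OF tendsto_zero_powrI[OF rearr_seq_tail_tendsto_0[OF x0] tendsto_const _ p_pos]]
      rearr_nonneg[OF tail0] by auto
  moreover have "\<forall>\<^sub>F (n, N) in at_top \<times>\<^sub>F sequentially.
      norm (w n * rearr (seq_tail N x) n powr p) \<le> w n * rearr x n powr p"
    using rearr_mono[OF x0 tail_le] rearr_nonneg[OF tail0] w_nonneg p_pos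
    by (intro always_eventually) (auto intro!: mult_left_mono powr_mono2)
  ultimately have "(\<lambda>N. \<Sum>n. w n * rearr (seq_tail N x) n powr p) \<longlonglongrightarrow> (\<Sum>n. (0::real))"
    using sm by (intro conjunct2[OF conjunct2[OF tannerys_theorem]]) auto
  then show ?thesis by (simp add: lorentz_sum_def)
qed

lemma lorentz_norm_nonneg: "lorentz_norm w p x \<ge> 0"
  by (simp add: lorentz_norm_eq_lorentz_sum)

lemma lorentz_sum_eq_norm_powr: "x \<in> lorentz_space w p \<Longrightarrow> lorentz_sum w p x = lorentz_norm w p x powr p"
  using lorentz_sum_nonneg[of x] p_pos by (simp add: lorentz_norm_eq_lorentz_sum powr_powr)

lemma root_le_lorentz_norm: "0 \<le> a \<Longrightarrow> a \<le> lorentz_sum w p x \<Longrightarrow> a powr (1 / p) \<le> lorentz_norm w p x"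
  unfolding lorentz_norm_eq_lorentz_sum using p_pos by (intro powr_mono2) auto

lemma lorentz_norm_le_root:
  "x \<in> lorentz_space w p \<Longrightarrow> lorentz_sum w p x \<le> a \<Longrightarrow> lorentz_norm w p x \<le> a powr (1 / p)"
  unfolding lorentz_norm_eq_lorentz_sum using p_pos lorentz_sum_nonneg by (intro powr_mono2) auto

lemma abs_le_lorentz_norm: "x \<in> lorentz_space w p \<Longrightarrow> \<bar>x k\<bar> \<le> lorentz_norm w p x"
  using root_le_lorentz_norm[OF _ abs_powr_le_lorentz_sum, of x k] p_pos by (simp add: powr_powr)

lemma lorentz_norm_mono:
  assumes "x \<in> lorentz_space w p" "\<And>k. \<bar>y k\<bar> \<le> \<bar>x k\<bar>"
  shows "y \<in> lorentz_space w p \<and> lorentz_norm w p y \<le> lorentz_norm w p x"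
  using lorentz_sum_mono[OF assms] lorentz_sum_nonneg[of y] p_pos
  by (auto simp: lorentz_norm_eq_lorentz_sum intro: powr_mono2)

lemma lorentz_seq_head: "x \<in> lorentz_space w p \<Longrightarrow>
    seq_head N x \<in> lorentz_space w p \<and> lorentz_norm w p (seq_head N x) \<le> lorentz_norm w p x"
  and lorentz_seq_tail: "x \<in> lorentz_space w p \<Longrightarrow>
    seq_tail N x \<in> lorentz_space w p \<and> lorentz_norm w p (seq_tail N x) \<le> lorentz_norm w p x"
  by (rule lorentz_norm_mono; simp add: seq_head_def seq_tail_def)+

lemma lorentz_norm_quasi_triangle:
  assumes "1 \<le> p" "x \<in> lorentz_space w p" "y \<in> lorentz_space w p" "\<And>k. \<bar>s k\<bar> \<le> \<bar>x k\<bar> + \<bar>y k\<bar>"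
  shows "s \<in> lorentz_space w p \<and> lorentz_norm w p s \<le> 4 * (lorentz_norm w p x + lorentz_norm w p y)"
proof -
  let ?m = "max (lorentz_norm w p x) (lorentz_norm w p y)"
  have s: "s \<in> lorentz_space w p" "lorentz_sum w p s \<le> 2 powr p * (lorentz_sum w p x + lorentz_sum w p y)"
    using lorentz_sum_quasi_triangle[OF assms(2-4)] by auto
  have m: "?m \<ge> 0" using lorentz_norm_nonneg by (simp add: le_max_iff_disj)
  have "lorentz_norm w p x powr p \<le> ?m powr p" "lorentz_norm w p y powr p \<le> ?m powr p"
    using lorentz_norm_nonneg p_pos by (auto intro!: powr_mono2)
  then have "lorentz_sum w p x + lorentz_sum w p y \<le> 2 * ?m powr p"
    using assms(2,3) by (simp add: lorentz_sum_eq_norm_powr)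
  also have "\<dots> \<le> 2 powr p * ?m powr p"
    using powr_mono[of 1 p 2] assms(1) by (intro mult_right_mono) auto
  finally have "lorentz_sum w p s \<le> 2 powr p * (2 powr p * ?m powr p)"
    using s(2) by (meson mult_left_mono order.trans powr_ge_zero)
  also have "\<dots> = (4 * ?m) powr p" using m by (simp add: powr_mult[symmetric])
  finally have "lorentz_norm w p s \<le> ((4 * ?m) powr p) powr (1/p)"
    by (rule lorentz_norm_le_root[OF s(1)])
  also have "\<dots> = 4 * ?m" using m p_pos by (simp add: powr_powr)
  also have "\<dots> \<le> 4 * (lorentz_norm w p x + lorentz_norm w p y)"
    using lorentz_norm_nonneg[of x] lorentz_norm_nonneg[of y] by (simp add: max_def)
  finally show ?thesis using s(1) by simp
qed

lemma lorentz_norm_tail_tendsto_0: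
  assumes "x \<in> lorentz_space w p"
  shows "(\<lambda>N. lorentz_norm w p (seq_tail N x)) \<longlonglongrightarrow> 0"
  unfolding lorentz_norm_eq_lorentz_sum
  using lorentz_sum_nonneg lorentz_seq_tail[OF assms] p_pos
  by (intro tendsto_zero_powrI[OF lorentz_sum_tail_tendsto_0[OF assms] tendsto_const]) auto

lemma lorentz_norm_le_ell_norm_finite_support:
  assumes "\<And>k. k \<ge> N \<Longrightarrow> s k = 0"
  shows "s \<in> lorentz_space w p \<and> s \<in> ell_space p \<and> lorentz_norm w p s \<le> ell_norm p s"
proof -
  have "s \<in> lorentz_space w p" "lorentz_sum w p s \<le> (\<Sum>k<N. \<bar>s k\<bar> powr p)"
    using lorentz_sum_finite_support[OF assms] by auto
  moreover have "s \<in> ell_space p" "ell_sum p s = (\<Sum>k<N. \<bar>s k\<bar> powr p)"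
    using ell_sum_finite_support[OF assms] by auto
  ultimately show ?thesis using lorentz_norm_le_root by (simp add: ell_norm_eq_ell_sum)
qed

lemma lorentz_space_add:
  "x \<in> lorentz_space w p \<Longrightarrow> y \<in> lorentz_space w p \<Longrightarrow> (\<lambda>k. x k + y k) \<in> lorentz_space w p"
  using lorentz_sum_quasi_triangle[of x y "\<lambda>k. x k + y k"] abs_triangle_ineq by blast

lemma lorentz_space_sum:
  "finite I \<Longrightarrow> (\<And>i. i \<in> I \<Longrightarrow> u i \<in> lorentz_space w p) \<Longrightarrow>
    (\<lambda>k. \<Sum>i\<in>I. u i k) \<in> lorentz_space w p"
  by (induction I rule: finite_induct) (auto intro: lorentz_space_add)

end

section \<open>Operators from Lorentz sequence spaces to \<open>\<ell>\<^sub>p\<close>\<close>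

locale lorentz_ell_operator = lorentz_weight +
  fixes T :: "(nat \<Rightarrow> real) \<Rightarrow> nat \<Rightarrow> real" and C :: real
  assumes p_ge_1: "1 \<le> p"
    and T_maps: "\<And>x. x \<in> lorentz_space w p \<Longrightarrow> T x \<in> ell_space p"
    and T_add: "\<And>x y. x \<in> lorentz_space w p \<Longrightarrow> y \<in> lorentz_space w p \<Longrightarrow>
      T (\<lambda>k. x k + y k) = (\<lambda>k. T x k + T y k)"
    and T_scale: "\<And>x c. x \<in> lorentz_space w p \<Longrightarrow> T (\<lambda>k. c * x k) = (\<lambda>k. c * T x k)"
    and T_bounded: "\<And>x. x \<in> lorentz_space w p \<Longrightarrow> ell_norm p (T x) \<le> C * lorentz_norm w p x"
    and C_ge_1: "C \<ge> 1"
begin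

lemma T_zero: "T (\<lambda>k. 0) = (\<lambda>k. 0)"
  using T_scale[OF lorentz_space_zero, of 0] by simp

lemma T_diff:
  assumes "x \<in> lorentz_space w p" "y \<in> lorentz_space w p"
  shows "T (\<lambda>k. x k - y k) = (\<lambda>k. T x k - T y k)"
proof -
  have "(\<lambda>k. - y k) \<in> lorentz_space w p" using lorentz_sum_scale[OF assms(2), of "-1"] by simp
  then show ?thesis using T_add[OF assms(1)] T_scale[OF assms(2), of "-1"] by fastforce
qed

lemma T_sum:
  "finite I \<Longrightarrow> (\<And>i. i \<in> I \<Longrightarrow> u i \<in> lorentz_space w p) \<Longrightarrow>
    T (\<lambda>k. \<Sum>i\<in>I. u i k) = (\<lambda>k. \<Sum>i\<in>I. T (u i) k)"
proof (induction I rule: finite_induct)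
  case (insert i I)
  then show ?case using T_add[of "u i" "\<lambda>k. \<Sum>j\<in>I. u j k"] lorentz_space_sum[of I u] by simp
qed (simp add: T_zero)

lemma T_norm_le:
  "x \<in> lorentz_space w p \<Longrightarrow> lorentz_norm w p x \<le> B \<Longrightarrow> ell_norm p (T x) \<le> C * B"
  using T_bounded[of x] C_ge_1 by (smt (verit) mult_left_mono)

lemma not_compact_imp_coordinatewise_convergent_seq:
  assumes "\<not> compact_op (lorentz_space w p) (lorentz_norm w p) (ell_space p) (ell_norm p) T"
  obtains v bd a y where "\<And>j. v j \<in> lorentz_space w p" "\<And>j. lorentz_norm w p (v j) \<le> bd"
    "\<And>k. (\<lambda>j. v j k) \<longlonglongrightarrow> a k" "\<And>k. (\<lambda>j. T (v j) k) \<longlonglongrightarrow> y k" "y \<in> ell_space p"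
    "\<not> (\<lambda>j. ell_norm p (\<lambda>k. T (v j) k - y k)) \<longlonglongrightarrow> 0"
proof -
  obtain u :: "nat \<Rightarrow> nat \<Rightarrow> real" and bd
    where u_bd: "\<forall>j. u j \<in> lorentz_space w p \<and> lorentz_norm w p (u j) \<le> bd"
    and no_conv: "\<not> (\<exists>r y. strict_mono r \<and> y \<in> ell_space p \<and>
      (\<lambda>j. ell_norm p (seq_diff (T (u (r j))) y)) \<longlonglongrightarrow> 0)"
    using assms unfolding compact_op_def by auto
  have u: "\<And>j. u j \<in> lorentz_space w p" "\<And>j. lorentz_norm w p (u j) \<le> bd" using u_bd by auto
  have bd: "bd \<ge> 0" using u(2)[of 0] lorentz_norm_nonneg[of "u 0"] by linarith
  have "\<bar>u j k\<bar> \<le> C * bd" for j k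
    using abs_le_lorentz_norm[OF u(1), of j k] u(2)[of j] mult_right_mono[OF C_ge_1 bd] by linarith
  moreover have "\<bar>T (u j) k\<bar> \<le> C * bd" for j k
    using abs_le_ell_norm[OF _ T_maps[OF u(1)]] T_norm_le[OF u] p_pos by (meson order.trans)
  ultimately obtain r a y where r: "strict_mono r"
    and a: "\<And>k. (\<lambda>j. u (r j) k) \<longlonglongrightarrow> a k" and y: "\<And>k. (\<lambda>j. T (u (r j)) k) \<longlonglongrightarrow> y k"
    by (rule bounded_seq_pair_coordinatewise_convergent_subseq[of u "C * bd" "\<lambda>j. T (u j)"]) blast
  have y_ell: "y \<in> ell_space p"
    by (rule ell_space_coordinatewise_limit[OF p_pos T_maps[OF u(1)] T_norm_le[OF u]]) (rule y)
  show ?thesis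
  proof (rule that[of "\<lambda>j. u (r j)" bd a y])
    show "\<not> (\<lambda>j. ell_norm p (\<lambda>k. T (u (r j)) k - y k)) \<longlonglongrightarrow> 0"
      using no_conv r y_ell by (auto simp: seq_diff_def)
  qed (use u a y y_ell in auto)
qed

lemma not_compact_imp_normalized_seq:
  assumes "\<not> compact_op (lorentz_space w p) (lorentz_norm w p) (ell_space p) (ell_norm p) T"
  obtains z \<delta> Z where "\<delta> > 0" "Z > 0"
    "\<And>m. z m \<in> lorentz_space w p" "\<And>m. lorentz_norm w p (z m) \<le> Z" "\<And>m. \<delta> \<le> ell_norm p (T (z m))"
    "\<And>k. (\<lambda>m. z m k) \<longlonglongrightarrow> 0" "\<And>k. (\<lambda>m. T (z m) k) \<longlonglongrightarrow> 0"
proof -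
  obtain v bd a y where v: "\<And>j. v j \<in> lorentz_space w p" "\<And>j. lorentz_norm w p (v j) \<le> bd"
    and a: "\<And>k. (\<lambda>j. v j k) \<longlonglongrightarrow> a k" and y: "\<And>k. (\<lambda>j. T (v j) k) \<longlonglongrightarrow> y k" "y \<in> ell_space p"
    and not_null: "\<not> (\<lambda>j. ell_norm p (\<lambda>k. T (v j) k - y k)) \<longlonglongrightarrow> 0"
    by (rule not_compact_imp_coordinatewise_convergent_seq[OF assms]) blast
  have bd: "bd \<ge> 0" using v(2)[of 0] lorentz_norm_nonneg[of "v 0"] by linarith
  \<comment> \<open>Differences of far-apart terms are coordinatewise null but stay away from 0 under T.\<close>
  define h where "h j = (\<lambda>k. T (v j) k - y k)" for j
  have h: "h j \<in> ell_space p" for j unfolding h_def using ell_norm_diff_le[OF p_ge_1 T_maps[OF v(1)] y(2)] by blast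
  have h0: "(\<lambda>j. h j k) \<longlonglongrightarrow> 0" for k
    using tendsto_diff[OF y(1)[of k] tendsto_const[of "y k"]] by (simp add: h_def)
  have "\<not> (\<lambda>j. ell_norm p (h j)) \<longlonglongrightarrow> 0" using not_null by (simp add: h_def)
  then obtain \<epsilon> where \<epsilon>: "\<epsilon> > 0" "\<And>m. \<exists>j\<ge>m. \<epsilon> \<le> ell_norm p (\<lambda>k. h j k - h m k)"
    using ell_not_null_imp_separated[OF p_ge_1 h h0] by blast
  then obtain j where j: "\<And>m. j m \<ge> m" "\<And>m. \<epsilon> \<le> ell_norm p (\<lambda>k. h (j m) k - h m k)" by metis
  define z where "z m = (\<lambda>k. v (j m) k - v m k)" for m
  have z: "z m \<in> lorentz_space w p \<and>
      lorentz_norm w p (z m) \<le> 4 * (lorentz_norm w p (v (j m)) + lorentz_norm w p (v m))" for m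
    unfolding z_def by (rule lorentz_norm_quasi_triangle[OF p_ge_1 v(1) v(1)]) (rule abs_triangle_ineq4)
  have Tz: "T (z m) = (\<lambda>k. h (j m) k - h m k)" for m
    unfolding z_def T_diff[OF v(1) v(1)] h_def by simp
  show ?thesis
  proof (rule that[of \<epsilon> "8 * bd + 1" z])
    show "z m \<in> lorentz_space w p" "lorentz_norm w p (z m) \<le> 8 * bd + 1" for m
      using z[of m] v(2)[of m] v(2)[of "j m"] by auto
    show "\<epsilon> \<le> ell_norm p (T (z m))" for m using j(2) by (simp add: Tz)
    show "(\<lambda>m. z m k) \<longlonglongrightarrow> 0" for k
      using tendsto_diff[OF seq_compose_ge_tendsto[OF a[of k] j(1)] a[of k]] by (simp add: z_def)
    show "(\<lambda>m. T (z m) k) \<longlonglongrightarrow> 0" for k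
      using tendsto_diff[OF seq_compose_ge_tendsto[OF h0[of k] j(1)] h0[of k]] by (simp add: Tz)
  qed (use \<epsilon>(1) bd in auto)
qed

end

section \<open>The gliding hump\<close>

locale gliding_hump = lorentz_ell_operator +
  fixes z :: "nat \<Rightarrow> nat \<Rightarrow> real" and \<delta> Z :: real
  assumes z_in: "\<And>m. z m \<in> lorentz_space w p" and z_norm: "\<And>m. lorentz_norm w p (z m) \<le> Z"
    and Tz_norm: "\<And>m. \<delta> \<le> ell_norm p (T (z m))"
    and \<delta>_pos: "\<delta> > 0" and Z_pos: "Z > 0"
    and z_null: "\<And>k. (\<lambda>m. z m k) \<longlonglongrightarrow> 0" and Tz_null: "\<And>k. (\<lambda>m. T (z m) k) \<longlonglongrightarrow> 0"
begin

text \<open>The \<open>i\<close>-th hump is cut out of some \<open>z m\<close> with truncation error \<open>\<eta> i\<close>; the total error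
  \<open>(2 + 8 C) \<Sum> \<eta> i \<le> (2 + 8 C) \<theta> = \<delta> / 4\<close> stays below the size \<open>\<delta> / 2\<close> of the image humps.\<close>
definition "\<theta> = \<delta> / (4 * (2 + 8 * C))"
definition "\<eta> i = \<theta> / 2 ^ Suc i"

lemma \<theta>_pos: "\<theta> > 0" and \<eta>_pos: "\<eta> i > 0"
  using \<delta>_pos C_ge_1 by (simp_all add: \<theta>_def \<eta>_def)

lemma \<eta>_le_\<theta>: "\<eta> i \<le> \<theta>"
  using \<theta>_pos one_le_power[of "2::real" "Suc i"] by (simp add: \<eta>_def divide_le_eq)

lemma \<theta>_eq: "(2 + 8 * C) * \<theta> = \<delta> / 4"
  using C_ge_1 by (simp add: \<theta>_def field_simps)

lemma sum_\<eta>_le: "(\<Sum>i<J. \<eta> i) \<le> \<theta>"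
proof -
  have "(\<Sum>i<J. \<eta> i) = \<theta> * (1 - 1 / 2 ^ J)" by (induction J) (simp_all add: \<eta>_def field_simps)
  then show ?thesis using \<theta>_pos by (simp add: mult_left_le)
qed

lemma hump_error_le: "(2 + 8 * C) * \<eta> i \<le> \<delta> / 4"
proof -
  have "(2 + 8 * C) * \<eta> i \<le> (2 + 8 * C) * \<theta>" using C_ge_1 by (intro mult_left_mono \<eta>_le_\<theta>) auto
  then show ?thesis using \<theta>_eq by simp
qed

definition good_block :: "nat \<Rightarrow> nat \<Rightarrow> nat \<Rightarrow> nat \<Rightarrow> bool" where
  "good_block i N m N' \<longleftrightarrow> N < N' \<and>
     lorentz_norm w p (seq_head N (z m)) \<le> \<eta> i \<and> ell_norm p (seq_head N (T (z m))) \<le> \<eta> i \<and>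
     lorentz_norm w p (seq_tail N' (z m)) \<le> \<eta> i \<and> ell_norm p (seq_tail N' (T (z m))) \<le> \<eta> i"

lemma good_block_exists: "\<exists>m N'. good_block i N m N'"
proof -
  have e: "\<eta> i > 0" by (rule \<eta>_pos)
  obtain m1 where m1: "\<And>m. m \<ge> m1 \<Longrightarrow> ell_norm p (seq_head N (z m)) < \<eta> i"
    using LIMSEQ_D[OF ell_norm_head_tendsto_0[where N=N and h=z, OF p_pos z_null] e]
    by (auto simp: ell_norm_nonneg)
  obtain m2 where m2: "\<And>m. m \<ge> m2 \<Longrightarrow> ell_norm p (seq_head N (T (z m))) < \<eta> i"
    using LIMSEQ_D[OF ell_norm_head_tendsto_0[where N=N and h="\<lambda>m. T (z m)", OF p_pos Tz_null] e]
    by (auto simp: ell_norm_nonneg)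
  define m where "m = max m1 m2"
  have head: "lorentz_norm w p (seq_head N (z m)) \<le> \<eta> i" "ell_norm p (seq_head N (T (z m))) \<le> \<eta> i"
    using lorentz_norm_le_ell_norm_finite_support[of N "seq_head N (z m)"] m1[of m] m2[of m]
    by (auto simp: m_def seq_head_def)
  obtain n1 where n1: "\<And>n. n \<ge> n1 \<Longrightarrow> lorentz_norm w p (seq_tail n (z m)) < \<eta> i"
    using LIMSEQ_D[OF lorentz_norm_tail_tendsto_0[OF z_in] e] by (auto simp: lorentz_norm_nonneg)
  obtain n2 where n2: "\<And>n. n \<ge> n2 \<Longrightarrow> ell_norm p (seq_tail n (T (z m))) < \<eta> i"
    using LIMSEQ_D[OF ell_norm_tail_tendsto_0[OF p_pos T_maps[OF z_in]] e] by (auto simp: ell_norm_nonneg)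
  have "good_block i N m (max (max n1 n2) (Suc N))"
    unfolding good_block_def using head n1 n2 by (auto intro: less_imp_le)
  then show ?thesis by blast
qed

definition next_block :: "nat \<Rightarrow> nat \<Rightarrow> nat \<times> nat" where
  "next_block i N = (SOME q. good_block i N (fst q) (snd q))"

lemma good_next_block: "good_block i N (fst (next_block i N)) (snd (next_block i N))"
proof -
  have "\<exists>q. good_block i N (fst q) (snd q)" using good_block_exists by simp
  then show ?thesis unfolding next_block_def by (rule someI_ex)
qed

primrec block_start :: "nat \<Rightarrow> nat" where
  "block_start 0 = 0"
| "block_start (Suc i) = snd (next_block i (block_start i))"

definition hump_index :: "nat \<Rightarrow> nat" where
  "hump_index i = fst (next_block i (block_start i))"

definition in_block :: "nat \<Rightarrow> nat \<Rightarrow> bool" where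
  "in_block i k \<longleftrightarrow> block_start i \<le> k \<and> k < block_start (Suc i)"

definition hump :: "nat \<Rightarrow> nat \<Rightarrow> real" where
  "hump i = (\<lambda>k. if in_block i k then z (hump_index i) k else 0)"

definition image_hump :: "nat \<Rightarrow> nat \<Rightarrow> real" where
  "image_hump i = (\<lambda>k. if in_block i k then T (z (hump_index i)) k else 0)"

lemma good_block_start: "good_block i (block_start i) (hump_index i) (block_start (Suc i))"
  using good_next_block by (simp add: hump_index_def)

lemma block_start_strict_mono: "strict_mono block_start"
  using good_block_start by (simp add: strict_mono_Suc_iff good_block_def)

lemma in_block_exists: "\<exists>i. in_block i k"
proof -
  define i where "i = (LEAST i. k < block_start (Suc i))"
  have ex: "\<exists>i. k < block_start (Suc i)"
    using seq_suble[OF block_start_strict_mono, of "Suc k"] by (intro exI[of _ k]) simp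
  have "k < block_start (Suc i)" unfolding i_def by (rule LeastI_ex[OF ex])
  moreover have "block_start i \<le> k"
  proof (cases i)
    case (Suc j)
    then show ?thesis using not_less_Least[of j "\<lambda>i. k < block_start (Suc i)"] by (simp add: i_def)
  qed simp
  ultimately show ?thesis by (auto simp: in_block_def)
qed

lemma in_block_unique: "in_block i k \<Longrightarrow> in_block j k \<Longrightarrow> i = j"
  using strict_mono_less_eq[OF block_start_strict_mono] unfolding in_block_def
  by (metis Suc_leI le_less_trans linorder_neqE_nat not_less)

lemma hump_disjoint: "i \<noteq> j \<Longrightarrow> hump i k = 0 \<or> hump j k = 0"
  and image_hump_disjoint: "i \<noteq> j \<Longrightarrow> image_hump i k = 0 \<or> image_hump j k = 0"
  using in_block_unique by (auto simp: hump_def image_hump_def)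

lemma hump_in: "hump i \<in> lorentz_space w p" and hump_norm: "lorentz_norm w p (hump i) \<le> Z"
proof -
  have "hump i \<in> lorentz_space w p \<and> lorentz_norm w p (hump i) \<le> lorentz_norm w p (z (hump_index i))"
    by (rule lorentz_norm_mono[OF z_in]) (simp add: hump_def)
  then show "hump i \<in> lorentz_space w p" "lorentz_norm w p (hump i) \<le> Z"
    using z_norm[of "hump_index i"] by auto
qed

lemma image_hump_in: "image_hump i \<in> ell_space p"
  using ell_mono[OF p_pos T_maps[OF z_in[of "hump_index i"]], of "image_hump i"] by (simp add: image_hump_def)

lemma image_hump_approx: "ell_norm p (\<lambda>k. T (hump i) k - image_hump i k) \<le> (2 + 8 * C) * \<eta> i"
  and image_hump_large: "\<delta> / 2 \<le> ell_norm p (image_hump i)"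
proof -
  let ?z = "z (hump_index i)" and ?N = "block_start i" and ?N' = "block_start (Suc i)"
  have good: "lorentz_norm w p (seq_head ?N ?z) \<le> \<eta> i" "ell_norm p (seq_head ?N (T ?z)) \<le> \<eta> i"
    "lorentz_norm w p (seq_tail ?N' ?z) \<le> \<eta> i" "ell_norm p (seq_tail ?N' (T ?z)) \<le> \<eta> i"
    using good_block_start[of i] by (auto simp: good_block_def)
  define e where "e = (\<lambda>k. ?z k - hump i k)"
  have "\<bar>e k\<bar> \<le> \<bar>seq_head ?N ?z k\<bar> + \<bar>seq_tail ?N' ?z k\<bar>" for k
    by (auto simp: e_def hump_def in_block_def seq_head_def seq_tail_def)
  then have e: "e \<in> lorentz_space w p" "lorentz_norm w p e \<le> 8 * \<eta> i"
    using lorentz_norm_quasi_triangle[OF p_ge_1 lorentz_seq_head[OF z_in, THEN conjunct1]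
        lorentz_seq_tail[OF z_in, THEN conjunct1]] good(1,3)
    by fastforce+
  have Te: "ell_norm p (T e) \<le> C * (8 * \<eta> i)" by (rule T_norm_le[OF e])
  have "\<bar>T ?z k - image_hump i k\<bar> \<le> \<bar>seq_head ?N (T ?z) k\<bar> + \<bar>seq_tail ?N' (T ?z) k\<bar>" for k
    by (auto simp: image_hump_def in_block_def seq_head_def seq_tail_def)
  then have d: "(\<lambda>k. T ?z k - image_hump i k) \<in> ell_space p"
    "ell_norm p (\<lambda>k. T ?z k - image_hump i k) \<le> 2 * \<eta> i"
    using ell_minkowski[OF p_ge_1 ell_seq_head[OF p_pos T_maps[OF z_in], THEN conjunct1]
        ell_seq_tail[OF p_pos T_maps[OF z_in], THEN conjunct1]] good(2,4)
    by fastforce+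
  have "T (hump i) = (\<lambda>k. T ?z k - T e k)"
    using T_diff[OF z_in[of "hump_index i"] e(1)] by (simp add: e_def)
  then have "(\<lambda>k. T (hump i) k - image_hump i k) = (\<lambda>k. (T ?z k - image_hump i k) - T e k)" by auto
  then have "ell_norm p (\<lambda>k. T (hump i) k - image_hump i k) \<le> 2 * \<eta> i + C * (8 * \<eta> i)"
    using ell_norm_diff_le[OF p_ge_1 d(1) T_maps[OF e(1)]] d(2) Te by simp
  then show "ell_norm p (\<lambda>k. T (hump i) k - image_hump i k) \<le> (2 + 8 * C) * \<eta> i"
    by (simp add: algebra_simps)
  have "ell_norm p (T ?z) \<le> ell_norm p (image_hump i) + ell_norm p (\<lambda>k. T ?z k - image_hump i k)"
    using ell_minkowski[OF p_ge_1 image_hump_in d(1), of "T ?z"] by simp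
  moreover have "2 * \<eta> i \<le> (2 + 8 * C) * \<eta> i"
    using \<eta>_pos[of i] C_ge_1 by (intro mult_right_mono) auto
  then have "2 * \<eta> i \<le> \<delta> / 2" using hump_error_le[of i] \<delta>_pos by linarith
  ultimately show "\<delta> / 2 \<le> ell_norm p (image_hump i)" using Tz_norm[of "hump_index i"] d(2) by linarith
qed

lemma hump_nonzero: "\<exists>k. in_block i k \<and> hump i k \<noteq> 0"
proof (rule ccontr)
  assume "\<not> ?thesis"
  then have "hump i = (\<lambda>k. 0)" by (auto simp: hump_def fun_eq_iff)
  then have "ell_norm p (\<lambda>k. -1 * image_hump i k) \<le> \<delta> / 4"
    using image_hump_approx[of i] hump_error_le[of i] by (simp add: T_zero)
  then show False using ell_norm_scale[OF p_pos image_hump_in, of "-1" i] image_hump_large[of i] \<delta>_pos by simp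
qed

lemma scaled_hump_in: "(\<lambda>k. c * hump i k) \<in> lorentz_space w p"
  using lorentz_sum_scale[OF hump_in] by blast

lemma scaled_image_hump_in: "(\<lambda>k. c * image_hump i k) \<in> ell_space p"
  using ell_norm_scale[OF p_pos image_hump_in] by blast

lemma lorentz_norm_block_sum_le:
  "lorentz_norm w p (\<lambda>k. \<Sum>i<J. a i * hump i k) \<le> Z * (\<Sum>i<J. \<bar>a i\<bar> powr p) powr (1 / p)"
proof -
  have sum: "(\<lambda>k. \<Sum>i<J. a i * hump i k) \<in> lorentz_space w p \<and>
      lorentz_sum w p (\<lambda>k. \<Sum>i<J. a i * hump i k) \<le> (\<Sum>i<J. lorentz_sum w p (\<lambda>k. a i * hump i k))"
    using hump_disjoint by (intro lorentz_sum_disjoint_sum scaled_hump_in) auto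
  have summand: "lorentz_sum w p (\<lambda>k. a i * hump i k) \<le> Z powr p * \<bar>a i\<bar> powr p" for i
    using lorentz_sum_scale[OF hump_in, of "a i" i] lorentz_sum_eq_norm_powr[OF hump_in, of i]
      powr_mono2[OF _ lorentz_norm_nonneg hump_norm, of p i] p_pos
    by (simp add: mult_left_mono mult.commute[of "Z powr p"])
  have "(\<Sum>i<J. lorentz_sum w p (\<lambda>k. a i * hump i k)) \<le> Z powr p * (\<Sum>i<J. \<bar>a i\<bar> powr p)"
    unfolding sum_distrib_left by (rule sum_mono) (rule summand)
  then have "lorentz_sum w p (\<lambda>k. \<Sum>i<J. a i * hump i k) \<le> Z powr p * (\<Sum>i<J. \<bar>a i\<bar> powr p)"
    using sum by linarith
  then have "lorentz_norm w p (\<lambda>k. \<Sum>i<J. a i * hump i k) \<le> (Z powr p * (\<Sum>i<J. \<bar>a i\<bar> powr p)) powr (1 / p)"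
    using sum by (intro lorentz_norm_le_root) auto
  then show ?thesis using Z_pos p_pos by (simp add: powr_mult powr_powr sum_nonneg)
qed

lemma ell_norm_image_block_sum_ge:
  "\<delta> / 2 * (\<Sum>i<J. \<bar>a i\<bar> powr p) powr (1 / p) \<le> ell_norm p (\<lambda>k. \<Sum>i<J. a i * image_hump i k)"
proof -
  have "ell_sum p (\<lambda>k. \<Sum>i<J. a i * image_hump i k) = (\<Sum>i<J. \<bar>a i\<bar> powr p * ell_sum p (image_hump i))"
  proof -
    have "ell_sum p (\<lambda>k. \<Sum>i<J. a i * image_hump i k) = (\<Sum>i<J. ell_sum p (\<lambda>k. a i * image_hump i k))"
      using image_hump_disjoint by (intro ell_sum_disjoint_sum[OF p_ge_1] scaled_image_hump_in) auto
    then show ?thesis by (simp add: ell_sum_scale[OF p_pos image_hump_in])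
  qed
  moreover have "(\<delta> / 2) powr p \<le> ell_sum p (image_hump i)" for i
    using image_hump_large[of i] \<delta>_pos p_pos
    by (simp add: ell_sum_eq_norm_powr[OF p_pos image_hump_in] powr_mono2)
  ultimately have "(\<delta> / 2) powr p * (\<Sum>i<J. \<bar>a i\<bar> powr p) \<le> ell_sum p (\<lambda>k. \<Sum>i<J. a i * image_hump i k)"
    by (simp add: sum_distrib_left mult.commute mult_left_mono sum_mono)
  then have "((\<delta> / 2) powr p * (\<Sum>i<J. \<bar>a i\<bar> powr p)) powr (1 / p)
      \<le> ell_norm p (\<lambda>k. \<Sum>i<J. a i * image_hump i k)"
    unfolding ell_norm_eq_ell_sum using p_pos by (intro powr_mono2) (auto simp: sum_nonneg)
  then show ?thesis using \<delta>_pos p_pos by (simp add: powr_mult powr_powr sum_nonneg)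
qed

lemma T_block_sum:
  "T (\<lambda>k. \<Sum>i<J. a i * hump i k) = (\<lambda>k. \<Sum>i<J. a i * T (hump i) k)"
  using T_sum[of "{..<J}" "\<lambda>i k. a i * hump i k"] scaled_hump_in T_scale[OF hump_in] by simp

lemma T_block_sum_error:
  "ell_norm p (\<lambda>k. T (\<lambda>k. \<Sum>i<J. a i * hump i k) k - (\<Sum>i<J. a i * image_hump i k))
    \<le> \<delta> / 4 * (\<Sum>i<J. \<bar>a i\<bar> powr p) powr (1 / p)"
proof -
  let ?A = "(\<Sum>i<J. \<bar>a i\<bar> powr p) powr (1 / p)"
  define d where "d i = (\<lambda>k. T (hump i) k - image_hump i k)" for i
  have d: "d i \<in> ell_space p" for i
    unfolding d_def using ell_norm_diff_le[OF p_ge_1 T_maps[OF hump_in] image_hump_in] by blast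
  have term_bound: "ell_norm p (\<lambda>k. a i * d i k) \<le> ?A * ((2 + 8 * C) * \<eta> i)" if "i < J" for i
    unfolding ell_norm_scale[OF p_pos d, THEN conjunct2]
    using abs_le_root_sum_powr[OF p_pos that] image_hump_approx[of i] ell_norm_nonneg[of p "d i"]
    by (intro mult_mono) (auto simp: d_def)
  have "ell_norm p (\<lambda>k. T (\<lambda>k. \<Sum>i<J. a i * hump i k) k - (\<Sum>i<J. a i * image_hump i k))
      = ell_norm p (\<lambda>k. \<Sum>i<J. a i * d i k)"
    by (simp add: T_block_sum d_def sum_subtractf right_diff_distrib)
  also have "\<dots> \<le> (\<Sum>i<J. ell_norm p (\<lambda>k. a i * d i k))"
    using ell_norm_scale[OF p_pos d] by (intro ell_norm_sum_le[OF p_ge_1, THEN conjunct2]) auto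
  also have "\<dots> \<le> ?A * (2 + 8 * C) * (\<Sum>i<J. \<eta> i)"
    unfolding sum_distrib_left mult.assoc using term_bound by (intro sum_mono) auto
  also have "\<dots> \<le> ?A * (2 + 8 * C) * \<theta>"
    using C_ge_1 by (intro mult_left_mono sum_\<eta>_le) auto
  also have "\<dots> = \<delta> / 4 * ?A"
    by (simp add: \<theta>_eq[symmetric])
  finally show ?thesis .
qed

lemma block_sum_lower_bound:
  "\<delta> / 4 * lorentz_norm w p (\<lambda>k. \<Sum>i<J. a i * hump i k) \<le> Z * ell_norm p (T (\<lambda>k. \<Sum>i<J. a i * hump i k))"
proof -
  let ?A = "(\<Sum>i<J. \<bar>a i\<bar> powr p) powr (1 / p)"
  let ?x = "\<lambda>k. \<Sum>i<J. a i * hump i k" and ?G = "\<lambda>k. \<Sum>i<J. a i * image_hump i k"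
  have x: "?x \<in> lorentz_space w p" by (intro lorentz_space_sum scaled_hump_in) auto
  have G: "?G \<in> ell_space p" by (intro ell_norm_sum_le[OF p_ge_1, THEN conjunct1] scaled_image_hump_in) auto
  \<comment> \<open>T x is within \<open>\<delta>/4 A\<close> of the disjoint sum G, whose norm is at least \<open>\<delta>/2 A\<close>.\<close>
  have "ell_norm p ?G \<le> ell_norm p (T ?x) + ell_norm p (\<lambda>k. T ?x k - ?G k)"
    using ell_minkowski[OF p_ge_1 T_maps[OF x] ell_norm_diff_le[OF p_ge_1 T_maps[OF x] G, THEN conjunct1], of ?G]
    by (simp add: abs_triangle_ineq[of "T ?x k" "?G k - T ?x k" for k, simplified] abs_minus_commute)
  then have "\<delta> / 4 * ?A \<le> ell_norm p (T ?x)"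
    using ell_norm_image_block_sum_ge[of a J] T_block_sum_error[of a J] by linarith
  then have "Z * (\<delta> / 4 * ?A) \<le> Z * ell_norm p (T ?x)" using Z_pos by simp
  moreover have "\<delta> / 4 * lorentz_norm w p ?x \<le> \<delta> / 4 * (Z * ?A)"
    using lorentz_norm_block_sum_le[of a J] \<delta>_pos by simp
  ultimately show ?thesis by (simp add: algebra_simps)
qed

definition block_subspace :: "(nat \<Rightarrow> real) set" where
  "block_subspace = {x \<in> lorentz_space w p. \<forall>i. \<exists>c. \<forall>k. in_block i k \<longrightarrow> x k = c * hump i k}"

lemma block_subspace_coeffs:
  assumes "x \<in> block_subspace"
  obtains a where "\<And>i k. in_block i k \<Longrightarrow> x k = a i * hump i k"
proof -
  have "\<forall>i. \<exists>c. \<forall>k. in_block i k \<longrightarrow> x k = c * hump i k" using assms by (simp add: block_subspace_def)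
  then show ?thesis using that by metis
qed

lemma seq_head_block_start:
  assumes "\<And>i k. in_block i k \<Longrightarrow> x k = a i * hump i k"
  shows "seq_head (block_start J) x = (\<lambda>k. \<Sum>i<J. a i * hump i k)"
proof
  fix k
  obtain i0 where i0: "in_block i0 k" using in_block_exists by blast
  have "(\<Sum>i<J. a i * hump i k) = (\<Sum>i\<in>{..<J} \<inter> {i0}. a i * hump i k)"
    using in_block_unique[OF i0] by (intro sum.mono_neutral_right) (auto simp: hump_def)
  moreover have "k < block_start J \<longleftrightarrow> i0 < J"
    using i0 strict_mono_less[OF block_start_strict_mono] strict_mono_less_eq[OF block_start_strict_mono]
    unfolding in_block_def by (metis Suc_leI le_less_trans not_less)
  ultimately show "seq_head (block_start J) x k = (\<Sum>i<J. a i * hump i k)"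
    using assms[OF i0] by (auto simp: seq_head_def)
qed

lemma block_subspace_lower_bound:
  assumes "x \<in> block_subspace"
  shows "\<delta> / 4 * lorentz_norm w p x \<le> 4 * Z * ell_norm p (T x)"
proof -
  have x: "x \<in> lorentz_space w p" using assms by (simp add: block_subspace_def)
  obtain a where a: "\<And>i k. in_block i k \<Longrightarrow> x k = a i * hump i k"
    using block_subspace_coeffs[OF assms] by blast
  define head where "head J = seq_head (block_start J) x" for J
  define tail where "tail J = seq_tail (block_start J) x" for J
  have head: "head J \<in> lorentz_space w p" and tail: "tail J \<in> lorentz_space w p" for J
    using lorentz_seq_head[OF x] lorentz_seq_tail[OF x] by (auto simp: head_def tail_def)
  have split: "x = (\<lambda>k. head J k + tail J k)" for J by (auto simp: head_def tail_def seq_head_def seq_tail_def)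
  have bound: "\<delta> / 4 * lorentz_norm w p x \<le> 4 * Z * ell_norm p (T x) + (4 * Z * C + \<delta>) * lorentz_norm w p (tail J)" for J
  proof -
    have "lorentz_norm w p x \<le> 4 * (lorentz_norm w p (head J) + lorentz_norm w p (tail J))"
      using lorentz_norm_quasi_triangle[OF p_ge_1 head tail, of x] split abs_triangle_ineq by metis
    then have "\<delta> / 4 * lorentz_norm w p x \<le> \<delta> / 4 * (4 * (lorentz_norm w p (head J) + lorentz_norm w p (tail J)))"
      using \<delta>_pos by (intro mult_left_mono) auto
    then have x_le: "\<delta> / 4 * lorentz_norm w p x \<le> \<delta> * lorentz_norm w p (head J) + \<delta> * lorentz_norm w p (tail J)"
      by (simp add: algebra_simps)
    have head_le: "\<delta> / 4 * lorentz_norm w p (head J) \<le> Z * ell_norm p (T (head J))"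
      using block_sum_lower_bound[of a J] seq_head_block_start[OF a] by (simp add: head_def)
    have "T (head J) = (\<lambda>k. T x k - T (tail J) k)"
      using T_add[OF head tail] split by (metis add_diff_cancel_right')
    then have "ell_norm p (T (head J)) \<le> ell_norm p (T x) + ell_norm p (T (tail J))"
      using ell_norm_diff_le[OF p_ge_1 T_maps[OF x] T_maps[OF tail[of J]]] by simp
    then have "ell_norm p (T (head J)) \<le> ell_norm p (T x) + C * lorentz_norm w p (tail J)"
      using T_bounded[OF tail[of J]] by linarith
    then have "Z * ell_norm p (T (head J)) \<le> Z * (ell_norm p (T x) + C * lorentz_norm w p (tail J))"
      using Z_pos by (intro mult_left_mono) auto
    then show ?thesis using x_le head_le by (simp add: algebra_simps)
  qed
  have "(\<lambda>J. lorentz_norm w p (tail J)) \<longlonglongrightarrow> 0"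
    unfolding tail_def
    by (rule seq_compose_ge_tendsto[OF lorentz_norm_tail_tendsto_0[OF x] seq_suble[OF block_start_strict_mono]])
  then have "(\<lambda>J. 4 * Z * ell_norm p (T x) + (4 * Z * C + \<delta>) * lorentz_norm w p (tail J))
      \<longlonglongrightarrow> 4 * Z * ell_norm p (T x)"
    by (auto intro!: tendsto_eq_intros)
  then show ?thesis using bound by (intro LIMSEQ_le_const) auto
qed

lemma hump_in_block_subspace: "hump i \<in> block_subspace"
proof -
  have "\<exists>c. \<forall>k. in_block j k \<longrightarrow> hump i k = c * hump j k" for j
    by (cases "i = j") (auto intro: exI[of _ 0] exI[of _ 1] simp: hump_def dest: in_block_unique)
  then show ?thesis using hump_in by (simp add: block_subspace_def)
qed

lemma block_subspace_linear: "linear_subspace_of block_subspace (lorentz_space w p)"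
proof -
  have "(\<lambda>k. x k + y k) \<in> block_subspace" if x: "x \<in> block_subspace" and y: "y \<in> block_subspace" for x y
  proof -
    obtain a where "\<And>i k. in_block i k \<Longrightarrow> x k = a i * hump i k"
      using block_subspace_coeffs[OF x] by blast
    moreover obtain b where "\<And>i k. in_block i k \<Longrightarrow> y k = b i * hump i k"
      using block_subspace_coeffs[OF y] by blast
    ultimately have "\<forall>i. \<exists>c. \<forall>k. in_block i k \<longrightarrow> x k + y k = c * hump i k"
      by (metis distrib_right)
    then show ?thesis using x y lorentz_space_add by (simp add: block_subspace_def)
  qed
  moreover have "(\<lambda>k. c * x k) \<in> block_subspace" if x: "x \<in> block_subspace" for x c
  proof -
    obtain a where "\<And>i k. in_block i k \<Longrightarrow> x k = a i * hump i k"
      using block_subspace_coeffs[OF x] by blast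
    then have "\<forall>i. \<exists>d. \<forall>k. in_block i k \<longrightarrow> c * x k = d * hump i k"
      by (metis mult.assoc)
    then show ?thesis using x lorentz_sum_scale by (simp add: block_subspace_def)
  qed
  moreover have "(\<lambda>k. 0) \<in> block_subspace" by (auto simp: block_subspace_def intro: exI[of _ 0])
  ultimately show ?thesis unfolding linear_subspace_of_def by (auto simp: block_subspace_def)
qed

text \<open>Norm convergence implies coordinatewise convergence, and each block is spanned by one
  coordinate where the hump does not vanish.\<close>
lemma block_subspace_closed: "norm_closed_in block_subspace (lorentz_space w p) (lorentz_norm w p)"
  unfolding norm_closed_in_def
proof (intro allI impI)
  fix u :: "nat \<Rightarrow> nat \<Rightarrow> real" and x
  assume u: "\<forall>j. u j \<in> block_subspace" and x: "x \<in> lorentz_space w p"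
    and lim: "(\<lambda>j. lorentz_norm w p (seq_diff (u j) x)) \<longlonglongrightarrow> 0"
  have coord: "(\<lambda>j. u j k) \<longlonglongrightarrow> x k" for k
  proof -
    have diff: "seq_diff (u j) x \<in> lorentz_space w p" for j
      using u x lorentz_norm_quasi_triangle[OF p_ge_1, of "u j" x "seq_diff (u j) x"]
      by (auto simp: block_subspace_def seq_diff_def abs_triangle_ineq4)
    have "\<bar>u j k - x k\<bar> \<le> lorentz_norm w p (seq_diff (u j) x)" for j
      using abs_le_lorentz_norm[OF diff[of j], of k] by (simp add: seq_diff_def)
    then have "(\<lambda>j. u j k - x k) \<longlonglongrightarrow> 0" by (rule tendsto_0_if_abs_le[OF lim])
    then show ?thesis by (simp add: LIM_zero_iff)
  qed
  have "\<exists>c. \<forall>k. in_block i k \<longrightarrow> x k = c * hump i k" for i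
  proof -
    obtain k0 where k0: "in_block i k0" "hump i k0 \<noteq> 0" using hump_nonzero by blast
    have "\<forall>j. \<exists>c. \<forall>k. in_block i k \<longrightarrow> u j k = c * hump i k" using u by (simp add: block_subspace_def)
    then obtain a where a: "\<And>j k. in_block i k \<Longrightarrow> u j k = a j * hump i k" by metis
    have a_lim: "(\<lambda>j. a j) \<longlonglongrightarrow> x k0 / hump i k0"
      using tendsto_divide[OF coord[of k0] tendsto_const k0(2)] a[OF k0(1)] k0(2) by simp
    have "(\<lambda>j. u j k) \<longlonglongrightarrow> x k0 / hump i k0 * hump i k" if "in_block i k" for k
      unfolding a[OF that] by (rule tendsto_mult_right[OF a_lim])
    then show ?thesis using coord LIMSEQ_unique by blast
  qed
  then show "x \<in> block_subspace" using x by (simp add: block_subspace_def)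
qed

lemma block_subspace_infinite_dimensional: "infinite_dimensional block_subspace"
  unfolding infinite_dimensional_def
proof (intro allI impI notI)
  fix F assume F: "finite F" and sub: "block_subspace \<subseteq> fspan F"
  obtain k where k: "\<And>i. in_block i (k i) \<and> hump i (k i) \<noteq> 0" using hump_nonzero by metis
  have "\<exists>i\<le>card F. hump i \<notin> fspan F"
  proof (rule diagonal_family_not_in_fspan)
    show "hump i (k i) \<noteq> 0" for i using k by blast
    show "hump j (k i) = 0" if "i \<noteq> j" for i j
      using k[of i] in_block_unique[of i "k i" j] that by (auto simp: hump_def)
  qed (use F in auto)
  then show False using sub hump_in_block_subspace by blast
qed

lemma not_strictly_singular: "\<not> strictly_singular (lorentz_space w p) (lorentz_norm w p) (ell_norm p) T"
proof -
  have "\<delta> / (16 * Z) * lorentz_norm w p x \<le> ell_norm p (T x)" if "x \<in> block_subspace" for x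
    using block_subspace_lower_bound[OF that] Z_pos by (simp add: field_simps)
  moreover have "\<delta> / (16 * Z) > 0" using \<delta>_pos Z_pos by simp
  ultimately show ?thesis
    unfolding strictly_singular_def
    using block_subspace_linear block_subspace_closed block_subspace_infinite_dimensional by blast
qed

end

theorem proposition6p9:
  fixes w :: "nat \<Rightarrow> real" and p :: real
    and T :: "(nat \<Rightarrow> real) \<Rightarrow> (nat \<Rightarrow> real)"
  assumes "1 \<le> p"
    and "w 0 = 1" and "decseq w" and "w \<longlonglongrightarrow> 0" and "\<not> summable w"
    and "bounded_linear_op (lorentz_space w p) (lorentz_norm w p) (ell_space p) (ell_norm p) T"
    and "strictly_singular (lorentz_space w p) (lorentz_norm w p) (ell_norm p) T"
  shows "compact_op (lorentz_space w p) (lorentz_norm w p) (ell_space p) (ell_norm p) T"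
proof (rule ccontr)
  assume not_compact: "\<not> ?thesis"
  obtain C0 where C0: "\<And>x. x \<in> lorentz_space w p \<Longrightarrow> ell_norm p (T x) \<le> C0 * lorentz_norm w p x"
    using assms(6) unfolding bounded_linear_op_def by blast
  interpret lorentz_ell_operator w p T "max C0 1"
  proof
    show "ell_norm p (T x) \<le> max C0 1 * lorentz_norm w p x" if "x \<in> lorentz_space w p" for x
      using C0[OF that] mult_right_mono[of C0 "max C0 1" "lorentz_norm w p x"]
      by (simp add: lorentz_norm_def)
  qed (use assms(1-4,6) in \<open>auto simp: bounded_linear_op_def\<close>)
  obtain z \<delta> Z where "\<delta> > 0" "Z > 0"
    "\<And>m. z m \<in> lorentz_space w p" "\<And>m. lorentz_norm w p (z m) \<le> Z" "\<And>m. \<delta> \<le> ell_norm p (T (z m))"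
    "\<And>k. (\<lambda>m. z m k) \<longlonglongrightarrow> 0" "\<And>k. (\<lambda>m. T (z m) k) \<longlonglongrightarrow> 0"
    by (rule not_compact_imp_normalized_seq[OF not_compact]) blast
  then interpret gliding_hump w p T "max C0 1" z \<delta> Z
    by unfold_locales
  show False using not_strictly_singular assms(7) by blast
qed

end
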